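(* Let $\tilde K=\sum_{i=1}^\infty a_iK_i$ where each $K_i$ is a Markov kernel reversible with respect to a probability distribution $\pi$, $a_i\ge0$, $\sum_i a_i=1$. Suppose $a_1>0$ and $K_1$ has $\pi$ as its unique invariant distribution. Then if $K_1$ is variance bounding, so is $\tilde K$; and if $K_1$ is geometrically ergodic, so is $\tilde K$.
   Context: For a kernel $P$ reversible w.r.t. $\pi$, $\sigma_0(P)$ denotes its spectrum as a self-adjoint operator on $L^2_0(\pi)$ (mean-zero square-integrable functions). $P$ is variance bounding if $\sup\sigma_0(P)<1$ and geometrically ergodic if $\sup|\sigma_0(P)|<1$. *)

theory Defs
  imports "HOL-Probability.Probability"
begin

definition markov_kernel :: "'a measure \<Rightarrow> ('a \<Rightarrow> 'a measure) \<Rightarrow> bool" where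
  "markov_kernel \<pi> K \<longleftrightarrow> K \<in> \<pi> \<rightarrow>\<^sub>M prob_algebra \<pi>"

definition reversible :: "'a measure \<Rightarrow> ('a \<Rightarrow> 'a measure) \<Rightarrow> bool" where
  "reversible \<pi> K \<longleftrightarrow> (\<forall>A\<in>sets \<pi>. \<forall>B\<in>sets \<pi>.
     (\<integral>\<^sup>+ x. indicator A x * emeasure (K x) B \<partial>\<pi>) =
     (\<integral>\<^sup>+ x. indicator B x * emeasure (K x) A \<partial>\<pi>))"

definition invariant_dist :: "'a measure \<Rightarrow> ('a \<Rightarrow> 'a measure) \<Rightarrow> 'a measure \<Rightarrow> bool" where
  "invariant_dist \<pi> K mu \<longleftrightarrow> prob_space mu \<and> sets mu = sets \<pi> \<and>
     (\<forall>B\<in>sets \<pi>. (\<integral>\<^sup>+ x. emeasure (K x) B \<partial>mu) = emeasure mu B)"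

definition unique_invariant :: "'a measure \<Rightarrow> ('a \<Rightarrow> 'a measure) \<Rightarrow> bool" where
  "unique_invariant \<pi> K \<longleftrightarrow> invariant_dist \<pi> K \<pi> \<and>
     (\<forall>mu. invariant_dist \<pi> K mu \<longrightarrow> mu = \<pi>)"

text \<open>The countable mixture sum_i a_i K_i (index 0 plays the role of K_1).\<close>
definition mixture :: "'a measure \<Rightarrow> (nat \<Rightarrow> real) \<Rightarrow> (nat \<Rightarrow> 'a \<Rightarrow> 'a measure) \<Rightarrow> 'a \<Rightarrow> 'a measure" where
  "mixture \<pi> a K x = measure_of (space \<pi>) (sets \<pi>)
      (\<lambda>B. \<Sum>i. ennreal (a i) * emeasure (K i x) B)"

text \<open>L^2_0(\<pi>): square-integrable, mean-zero real functions (elements of L^2 are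
  represented by functions; equality in L^2 is equality \<pi>-almost everywhere).\<close>
definition L2_0 :: "'a measure \<Rightarrow> ('a \<Rightarrow> real) set" where
  "L2_0 \<pi> = {f \<in> borel_measurable \<pi>. integrable \<pi> (\<lambda>x. (f x)\<^sup>2) \<and> (\<integral>x. f x \<partial>\<pi>) = 0}"

definition kop :: "('a \<Rightarrow> 'a measure) \<Rightarrow> ('a \<Rightarrow> real) \<Rightarrow> 'a \<Rightarrow> real" where
  "kop K f x = (\<integral>y. f y \<partial>(K x))"

text \<open>Spectrum of P on L^2_0(\<pi>): the (real, since P is self-adjoint) numbers lambda for
  which P - lambda I is not a bijection of L^2_0(\<pi>) (bounded inverse is then automatic
  by the open mapping theorem).\<close>
definition spectrum0 :: "'a measure \<Rightarrow> ('a \<Rightarrow> 'a measure) \<Rightarrow> real set" where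
  "spectrum0 \<pi> K = {l. \<not> (
     (\<forall>f\<in>L2_0 \<pi>. (AE x in \<pi>. kop K f x - l * f x = 0) \<longrightarrow> (AE x in \<pi>. f x = 0)) \<and>
     (\<forall>g\<in>L2_0 \<pi>. \<exists>f\<in>L2_0 \<pi>. AE x in \<pi>. kop K f x - l * f x = g x))}"

text \<open>sup sigma_0(P) < 1 (with sup of the empty set read as -infinity).\<close>
definition variance_bounding :: "'a measure \<Rightarrow> ('a \<Rightarrow> 'a measure) \<Rightarrow> bool" where
  "variance_bounding \<pi> K \<longleftrightarrow> (\<exists>r<1. \<forall>l\<in>spectrum0 \<pi> K. l \<le> r)"

definition geometrically_ergodic :: "'a measure \<Rightarrow> ('a \<Rightarrow> 'a measure) \<Rightarrow> bool" where
  "geometrically_ergodic \<pi> K \<longleftrightarrow> (\<exists>r<1. \<forall>l\<in>spectrum0 \<pi> K. \<bar>l\<bar> \<le> r)"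

end

theory Submission
  imports Defs
begin

text \<open>The Markov operator of a reversible kernel is a symmetric contraction of the real
  Hilbert space \<open>L\<^sup>2\<^sub>0(\<pi>)\<close>, and that of the mixture is \<open>\<Sum> a\<^sub>i K\<^sub>i\<close>. For a bounded symmetric
  operator the supremum of the spectrum equals the supremum of the quadratic form
  \<open>\<langle>B f, f\<rangle>\<close> on unit vectors. So if \<open>sup \<sigma>\<^sub>0(K\<^sub>1) \<le> r < 1\<close>, then \<open>\<langle>K\<^sub>1 f, f\<rangle> \<le> r \<parallel>f\<parallel>\<^sup>2\<close>
  while \<open>\<langle>K\<^sub>i f, f\<rangle> \<le> \<parallel>f\<parallel>\<^sup>2\<close> for every \<open>i\<close>, hence \<open>\<langle>K f, f\<rangle> \<le> (1 - a\<^sub>1 (1 - r)) \<parallel>f\<parallel>\<^sup>2\<close>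
  for the mixture \<open>K\<close> and \<open>sup \<sigma>\<^sub>0(K) \<le> 1 - a\<^sub>1 (1 - r) < 1\<close>. For geometric ergodicity
  the same argument also bounds the lower end of the spectrum.

  That the spectrum bounds the quadratic form is the harder half: with \<open>s\<close> the supremum of
  the form, \<open>B - s\<close> is nonpositive and its form comes arbitrarily close to \<open>0\<close> on unit
  vectors, so \<open>B - s\<close> is not bounded below and cannot be invertible, because the inverse of
  a bijective symmetric operator is bounded by the Hellinger--Toeplitz theorem (a
  gliding-hump argument). The other half is a Neumann series, once the numerical radius
  of a symmetric operator has been identified with its norm.\<close>

section \<open>Square-integrable functions\<close>

definition L2 :: "'a measure \<Rightarrow> ('a \<Rightarrow> real) set" where
  "L2 M = {f \<in> borel_measurable M. integrable M (\<lambda>x. (f x)\<^sup>2)}"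

definition L2_inner :: "'a measure \<Rightarrow> ('a \<Rightarrow> real) \<Rightarrow> ('a \<Rightarrow> real) \<Rightarrow> real" where
  "L2_inner M f g = (\<integral>x. f x * g x \<partial>M)"

definition L2_norm :: "'a measure \<Rightarrow> ('a \<Rightarrow> real) \<Rightarrow> real" where
  "L2_norm M f = sqrt (L2_inner M f f)"

lemma L2_0_imp_L2: "f \<in> L2_0 M \<Longrightarrow> f \<in> L2 M"
  unfolding L2_0_def L2_def by auto

lemma L2_0_measurable: "f \<in> L2_0 M \<Longrightarrow> f \<in> borel_measurable M"
  unfolding L2_0_def by auto

lemma L2_integrable_mult:
  assumes "f \<in> L2 M" "g \<in> L2 M"
  shows "integrable M (\<lambda>x. f x * g x)"
proof (rule Bochner_Integration.integrable_bound)
  show "integrable M (\<lambda>x. (f x)\<^sup>2 + (g x)\<^sup>2)" using assms unfolding L2_def by auto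
  show "(\<lambda>x. f x * g x) \<in> borel_measurable M" using assms unfolding L2_def by auto
  show "AE x in M. norm (f x * g x) \<le> norm ((f x)\<^sup>2 + (g x)\<^sup>2)"
  proof (intro AE_I2)
    fix x
    have "0 \<le> \<bar>f x\<bar> * \<bar>g x\<bar>" by simp
    moreover have "2 * \<bar>f x\<bar> * \<bar>g x\<bar> \<le> (f x)\<^sup>2 + (g x)\<^sup>2"
      using sum_squares_bound[of "\<bar>f x\<bar>" "\<bar>g x\<bar>"] by simp
    ultimately have "\<bar>f x\<bar> * \<bar>g x\<bar> \<le> (f x)\<^sup>2 + (g x)\<^sup>2" by linarith
    then show "norm (f x * g x) \<le> norm ((f x)\<^sup>2 + (g x)\<^sup>2)" by (simp add: abs_mult)
  qed
qed

lemma (in finite_measure) L2_integrable: "f \<in> L2 M \<Longrightarrow> integrable M f"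
  unfolding L2_def by (auto intro: square_integrable_imp_integrable)

lemma L2_lincomb:
  assumes "f \<in> L2 M" "g \<in> L2 M"
  shows "(\<lambda>x. a * f x + b * g x) \<in> L2 M"
proof -
  have "integrable M (\<lambda>x. a\<^sup>2 * (f x)\<^sup>2 + b\<^sup>2 * (g x)\<^sup>2 + 2*a*b * (f x * g x))"
    using assms L2_integrable_mult[OF assms] unfolding L2_def by auto
  then have "integrable M (\<lambda>x. (a * f x + b * g x)\<^sup>2)"
    by (rule back_subst[where P="integrable M"]) (auto simp: power2_eq_square algebra_simps)
  then show ?thesis using assms unfolding L2_def by auto
qed

lemma L2_abs: "f \<in> L2 M \<Longrightarrow> (\<lambda>x. \<bar>f x\<bar>) \<in> L2 M"
  unfolding L2_def by auto

context prob_space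
begin

lemma L2_0_lincomb:
  assumes "f \<in> L2_0 M" "g \<in> L2_0 M"
  shows "(\<lambda>x. a * f x + b * g x) \<in> L2_0 M"
proof -
  have L: "f \<in> L2 M" "g \<in> L2 M" using assms L2_0_imp_L2 by auto
  have "(\<lambda>x. a * f x + b * g x) \<in> L2 M" using L2_lincomb[OF L] .
  moreover have "(\<integral>x. a * f x + b * g x \<partial>M) = 0"
    using assms L2_integrable[OF L(1)] L2_integrable[OF L(2)] unfolding L2_0_def by simp
  ultimately show ?thesis unfolding L2_0_def L2_def by auto
qed

lemma L2_0_zero: "(\<lambda>x. 0) \<in> L2_0 M"
  unfolding L2_0_def by auto

lemma L2_0_scale: "f \<in> L2_0 M \<Longrightarrow> (\<lambda>x. c * f x) \<in> L2_0 M"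
  using L2_0_lincomb[of f f c 0] by simp

lemma L2_0_add: "f \<in> L2_0 M \<Longrightarrow> g \<in> L2_0 M \<Longrightarrow> (\<lambda>x. f x + g x) \<in> L2_0 M"
  using L2_0_lincomb[of f g 1 1] by simp

lemma L2_0_diff: "f \<in> L2_0 M \<Longrightarrow> g \<in> L2_0 M \<Longrightarrow> (\<lambda>x. f x - g x) \<in> L2_0 M"
  using L2_0_lincomb[of f g 1 "-1"] by simp

lemma L2_0_sum: "(\<And>n. u n \<in> L2_0 M) \<Longrightarrow> (\<lambda>x. \<Sum>n<(N::nat). u n x) \<in> L2_0 M"
  by (induction N) (simp_all add: L2_0_zero L2_0_add)

end

lemma L2_inner_commute: "L2_inner M f g = L2_inner M g f"
  unfolding L2_inner_def by (simp add: mult.commute)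

lemma L2_inner_lincomb_left:
  assumes "f \<in> L2 M" "g \<in> L2 M" "h \<in> L2 M"
  shows "L2_inner M (\<lambda>x. a * f x + b * g x) h = a * L2_inner M f h + b * L2_inner M g h"
proof -
  have "L2_inner M (\<lambda>x. a * f x + b * g x) h = (\<integral>x. a * (f x * h x) + b * (g x * h x) \<partial>M)"
    unfolding L2_inner_def by (simp add: algebra_simps)
  also have "\<dots> = a * L2_inner M f h + b * L2_inner M g h"
    using L2_integrable_mult[OF assms(1,3)] L2_integrable_mult[OF assms(2,3)] unfolding L2_inner_def by simp
  finally show ?thesis .
qed

lemma L2_inner_lincomb_right:
  assumes "f \<in> L2 M" "g \<in> L2 M" "h \<in> L2 M"
  shows "L2_inner M h (\<lambda>x. a * f x + b * g x) = a * L2_inner M h f + b * L2_inner M h g"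
  using L2_inner_lincomb_left[OF assms] by (simp add: L2_inner_commute)

lemma L2_inner_diff_left:
  "f \<in> L2 M \<Longrightarrow> g \<in> L2 M \<Longrightarrow> h \<in> L2 M \<Longrightarrow> L2_inner M (\<lambda>x. f x - g x) h = L2_inner M f h - L2_inner M g h"
  using L2_inner_lincomb_left[of f M g h 1 "-1"] by simp

lemma L2_inner_uminus_left:
  "f \<in> L2 M \<Longrightarrow> g \<in> L2 M \<Longrightarrow> L2_inner M (\<lambda>x. - f x) g = - L2_inner M f g"
  using L2_inner_lincomb_left[of f M f g "-1" 0] by simp

lemma L2_inner_self_nonneg: "0 \<le> L2_inner M f f"
  unfolding L2_inner_def by (intro integral_nonneg_AE) simp

lemma L2_inner_cong_AE:
  assumes "f \<in> borel_measurable M" "f' \<in> borel_measurable M" "g \<in> borel_measurable M" "g' \<in> borel_measurable M"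
   "AE x in M. f x = f' x" "AE x in M. g x = g' x"
  shows "L2_inner M f g = L2_inner M f' g'"
  unfolding L2_inner_def using assms by (intro integral_cong_AE) auto

lemma L2_inner_self_eq_0_iff:
  assumes "f \<in> L2 M"
  shows "L2_inner M f f = 0 \<longleftrightarrow> (AE x in M. f x = 0)"
proof -
  have "L2_inner M f f = (\<integral>x. (f x)\<^sup>2 \<partial>M)" unfolding L2_inner_def by (simp add: power2_eq_square)
  also have "\<dots> = 0 \<longleftrightarrow> (AE x in M. (f x)\<^sup>2 = 0)"
    using assms unfolding L2_def by (intro integral_nonneg_eq_0_iff_AE) auto
  finally show ?thesis by simp
qed

lemma L2_cong_AE:
  assumes "f \<in> L2 M" "g \<in> borel_measurable M" "AE x in M. f x = g x"
  shows "g \<in> L2 M"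
proof -
  have "AE x in M. (f x)\<^sup>2 = (g x)\<^sup>2" using assms(3) by eventually_elim simp
  then show ?thesis using assms unfolding L2_def by (auto intro: integrable_cong_AE_imp)
qed

lemma L2_norm_nonneg: "0 \<le> L2_norm M f"
  unfolding L2_norm_def using L2_inner_self_nonneg[of M f] by simp

lemma L2_norm_power2: "(L2_norm M f)\<^sup>2 = L2_inner M f f"
  unfolding L2_norm_def by (rule real_sqrt_pow2[OF L2_inner_self_nonneg])

lemma L2_norm_eq_0_iff:
  assumes "f \<in> L2 M"
  shows "L2_norm M f = 0 \<longleftrightarrow> (AE x in M. f x = 0)"
  using L2_inner_self_eq_0_iff[OF assms] unfolding L2_norm_def by simp

lemma L2_norm_cong_AE:
  assumes "f \<in> borel_measurable M" "g \<in> borel_measurable M" "AE x in M. f x = g x"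
  shows "L2_norm M f = L2_norm M g"
  unfolding L2_norm_def using L2_inner_cong_AE[OF assms(1,2,1,2) assms(3) assms(3)] by simp

lemma L2_norm_abs: "L2_norm M (\<lambda>x. \<bar>f x\<bar>) = L2_norm M f"
  unfolding L2_norm_def L2_inner_def by simp

lemma L2_inner_lincomb_self:
  assumes "f \<in> L2 M" "g \<in> L2 M"
  shows "L2_inner M (\<lambda>x. a * f x + b * g x) (\<lambda>x. a * f x + b * g x)
     = a\<^sup>2 * L2_inner M f f + 2 * a * b * L2_inner M f g + b\<^sup>2 * L2_inner M g g"
proof -
  have L: "(\<lambda>x. a * f x + b * g x) \<in> L2 M" using L2_lincomb[OF assms] .
  have "L2_inner M (\<lambda>x. a * f x + b * g x) (\<lambda>x. a * f x + b * g x)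
     = a * L2_inner M f (\<lambda>x. a * f x + b * g x) + b * L2_inner M g (\<lambda>x. a * f x + b * g x)"
    using L2_inner_lincomb_left[OF assms L] .
  also have "\<dots> = a * (a * L2_inner M f f + b * L2_inner M f g) + b * (a * L2_inner M g f + b * L2_inner M g g)"
    using L2_inner_lincomb_right[OF assms assms(1)] L2_inner_lincomb_right[OF assms assms(2)] by simp
  finally show ?thesis by (simp add: L2_inner_commute[of M g f] power2_eq_square algebra_simps)
qed

lemma quadratic_nonneg_imp_discriminant:
  fixes a b c :: real
  assumes q: "\<And>t. 0 \<le> a - 2 * t * b + t\<^sup>2 * c" and c: "0 \<le> c"
  shows "b\<^sup>2 \<le> a * c"
proof (cases "c = 0")
  case True
  show ?thesis
  proof (cases "b = 0")
    case False
    have "0 \<le> a - 2 * ((a + 1) / (2 * b)) * b + ((a + 1) / (2 * b))\<^sup>2 * c" by (rule q)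
    then show ?thesis using False True by (simp add: field_simps)
  qed (use True in simp)
next
  case False
  then have cp: "c > 0" using c by simp
  have "0 \<le> a - 2 * (b / c) * b + (b / c)\<^sup>2 * c" by (rule q)
  also have "\<dots> = a - b\<^sup>2 / c" using cp by (simp add: power2_eq_square field_simps)
  finally show ?thesis using cp by (simp add: field_simps)
qed

lemma L2_Cauchy_Schwarz:
  assumes "f \<in> L2 M" "g \<in> L2 M"
  shows "\<bar>L2_inner M f g\<bar> \<le> L2_norm M f * L2_norm M g"
proof -
  have "(L2_inner M f g)\<^sup>2 \<le> L2_inner M f f * L2_inner M g g"
  proof (rule quadratic_nonneg_imp_discriminant)
    fix t
    have "0 \<le> L2_inner M (\<lambda>x. 1 * f x + (-t) * g x) (\<lambda>x. 1 * f x + (-t) * g x)"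
      by (rule L2_inner_self_nonneg)
    then show "0 \<le> L2_inner M f f - 2 * t * L2_inner M f g + t\<^sup>2 * L2_inner M g g"
      using L2_inner_lincomb_self[OF assms, of 1 "-t"] by simp
  qed (rule L2_inner_self_nonneg)
  then have "sqrt ((L2_inner M f g)\<^sup>2) \<le> sqrt (L2_inner M f f * L2_inner M g g)"
    by (rule real_sqrt_le_mono)
  then show ?thesis unfolding L2_norm_def by (simp add: real_sqrt_mult)
qed

lemma L2_norm_lincomb_le:
  assumes "f \<in> L2 M" "g \<in> L2 M"
  shows "L2_norm M (\<lambda>x. a * f x + b * g x) \<le> \<bar>a\<bar> * L2_norm M f + \<bar>b\<bar> * L2_norm M g"
proof -
  have "2 * a * b * L2_inner M f g \<le> \<bar>2 * a * b * L2_inner M f g\<bar>" by (rule abs_ge_self)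
  also have "\<dots> = 2 * \<bar>a\<bar> * \<bar>b\<bar> * \<bar>L2_inner M f g\<bar>" by (simp add: abs_mult)
  also have "\<dots> \<le> 2 * \<bar>a\<bar> * \<bar>b\<bar> * (L2_norm M f * L2_norm M g)"
    by (intro mult_left_mono L2_Cauchy_Schwarz[OF assms]) auto
  finally have "(L2_norm M (\<lambda>x. a * f x + b * g x))\<^sup>2 \<le> (\<bar>a\<bar> * L2_norm M f + \<bar>b\<bar> * L2_norm M g)\<^sup>2"
    using L2_inner_lincomb_self[OF assms, of a b]
    by (simp add: L2_norm_power2[symmetric] power2_eq_square algebra_simps)
  then show ?thesis
    by (rule power2_le_imp_le) (simp add: L2_norm_nonneg)
qed

lemma L2_norm_scale:
  assumes "f \<in> L2 M"
  shows "L2_norm M (\<lambda>x. c * f x) = \<bar>c\<bar> * L2_norm M f"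
proof -
  have "L2_inner M (\<lambda>x. c * f x + 0 * f x) (\<lambda>x. c * f x + 0 * f x) = c\<^sup>2 * L2_inner M f f"
    using L2_inner_lincomb_self[OF assms assms, of c 0] by simp
  then show ?thesis unfolding L2_norm_def by (simp add: real_sqrt_mult)
qed

lemma L2_norm_uminus: "f \<in> L2 M \<Longrightarrow> L2_norm M (\<lambda>x. - f x) = L2_norm M f"
  using L2_norm_scale[of f M "-1"] by simp

lemma (in prob_space) abs_integral_le_L2_norm:
  assumes "f \<in> L2 M"
  shows "\<bar>\<integral>x. f x \<partial>M\<bar> \<le> L2_norm M f"
proof -
  have one: "(\<lambda>x. 1) \<in> L2 M" unfolding L2_def by auto
  have "L2_norm M (\<lambda>x. 1) = 1" unfolding L2_norm_def L2_inner_def by (simp add: prob_space)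
  moreover have "L2_inner M f (\<lambda>x. 1) = (\<integral>x. f x \<partial>M)" unfolding L2_inner_def by simp
  ultimately show ?thesis using L2_Cauchy_Schwarz[OF assms one] by simp
qed

lemma AE_zero_of_L2_norm_le_tendsto_0:
  assumes "f \<in> L2 M" "\<And>N. L2_norm M f \<le> t N" "t \<longlonglongrightarrow> 0"
  shows "AE x in M. f x = 0"
proof -
  have "L2_norm M f \<le> 0" using assms(2,3) by (intro LIMSEQ_le_const[of t 0 "L2_norm M f"]) auto
  then show ?thesis using L2_norm_nonneg[of M f] L2_norm_eq_0_iff[OF assms(1)] by simp
qed

lemma nn_integral_power2_eq_L2_norm:
  assumes "f \<in> L2 M"
  shows "(\<integral>\<^sup>+x. ennreal ((f x)\<^sup>2) \<partial>M) = ennreal ((L2_norm M f)\<^sup>2)"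
proof -
  have "(\<integral>\<^sup>+x. ennreal ((f x)\<^sup>2) \<partial>M) = ennreal (\<integral>x. (f x)\<^sup>2 \<partial>M)"
    using assms unfolding L2_def by (intro nn_integral_eq_integral) auto
  also have "(\<integral>x. (f x)\<^sup>2 \<partial>M) = (L2_norm M f)\<^sup>2"
    using L2_norm_power2[of M f] by (simp add: L2_inner_def power2_eq_square)
  finally show ?thesis .
qed

lemma L2_of_nn_integral_power2_le:
  assumes "f \<in> borel_measurable M" "(\<integral>\<^sup>+x. ennreal ((f x)\<^sup>2) \<partial>M) \<le> ennreal B" "0 \<le> B"
  shows "f \<in> L2 M" "L2_norm M f \<le> sqrt B"
proof -
  obtain c where c: "(\<integral>\<^sup>+x. ennreal ((f x)\<^sup>2) \<partial>M) = ennreal c" "0 \<le> c"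
    using assms(2) by (metis ennreal_cases ennreal_less_top le_less_trans less_top_ennreal top.not_eq_extremum)
  have "integrable M (\<lambda>x. (f x)\<^sup>2)"
    using assms(1) by (intro integrableI_nn_integral_finite[OF _ _ c(1)]) auto
  then show L: "f \<in> L2 M" using assms unfolding L2_def by auto
  have "(L2_norm M f)\<^sup>2 \<le> B"
    using assms(2,3) nn_integral_power2_eq_L2_norm[OF L] by simp
  then show "L2_norm M f \<le> sqrt B" by (simp add: real_le_rsqrt)
qed

lemma L2_norm_sum_abs_le:
  fixes N :: nat
  assumes "\<And>n. u n \<in> L2 M"
  shows "(\<lambda>x. \<Sum>n<N. \<bar>u n x\<bar>) \<in> L2 M \<and> L2_norm M (\<lambda>x. \<Sum>n<N. \<bar>u n x\<bar>) \<le> (\<Sum>n<N. L2_norm M (u n))"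
proof (induction N)
  case 0
  then show ?case unfolding L2_def L2_norm_def L2_inner_def by simp
next
  case (Suc N)
  have e: "(\<lambda>x. \<Sum>n<Suc N. \<bar>u n x\<bar>) = (\<lambda>x. 1 * (\<Sum>n<N. \<bar>u n x\<bar>) + 1 * \<bar>u N x\<bar>)" by simp
  have "L2_norm M (\<lambda>x. 1 * (\<Sum>n<N. \<bar>u n x\<bar>) + 1 * \<bar>u N x\<bar>)
      \<le> \<bar>1\<bar> * L2_norm M (\<lambda>x. \<Sum>n<N. \<bar>u n x\<bar>) + \<bar>1\<bar> * L2_norm M (\<lambda>x. \<bar>u N x\<bar>)"
    using Suc L2_abs[OF assms[of N]] by (intro L2_norm_lincomb_le) auto
  then show ?case using Suc L2_abs[OF assms[of N]] L2_lincomb[of "\<lambda>x. \<Sum>n<N. \<bar>u n x\<bar>" M "\<lambda>x. \<bar>u N x\<bar>" 1 1]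
    unfolding e by (auto simp: L2_norm_abs)
qed

lemma SUP_ennreal_incseq:
  fixes f :: "nat \<Rightarrow> real"
  assumes "incseq f" "f \<longlonglongrightarrow> L"
  shows "(SUP N. ennreal (f N)) = ennreal L"
proof -
  have "incseq (\<lambda>N. ennreal (f N))" using assms(1) by (simp add: incseq_def ennreal_leI)
  then have "(\<lambda>N. ennreal (f N)) \<longlonglongrightarrow> (SUP N. ennreal (f N))" by (rule LIMSEQ_SUP)
  moreover have "(\<lambda>N. ennreal (f N)) \<longlonglongrightarrow> ennreal L" using assms(2) by (rule tendsto_ennrealI)
  ultimately show ?thesis by (rule LIMSEQ_unique)
qed

lemma SUP_ennreal_power2_sum_abs:
  fixes u :: "nat \<Rightarrow> real"
  assumes fin: "(SUP N. ennreal ((\<Sum>n<N. \<bar>u n\<bar>)\<^sup>2)) \<noteq> \<infinity>"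
  shows "summable (\<lambda>n. \<bar>u n\<bar>)" "(SUP N. ennreal ((\<Sum>n<N. \<bar>u n\<bar>)\<^sup>2)) = ennreal ((\<Sum>n. \<bar>u n\<bar>)\<^sup>2)"
proof -
  obtain c where c: "(SUP N. ennreal ((\<Sum>n<N. \<bar>u n\<bar>)\<^sup>2)) = ennreal c" "0 \<le> c"
    using fin by (metis ennreal_cases infinity_ennreal_def)
  have "(\<Sum>n<N. \<bar>u n\<bar>)\<^sup>2 \<le> c" for N
  proof -
    have "ennreal ((\<Sum>n<N. \<bar>u n\<bar>)\<^sup>2) \<le> ennreal c"
      using c(1) SUP_upper[of N UNIV "\<lambda>N. ennreal ((\<Sum>n<N. \<bar>u n\<bar>)\<^sup>2)"] by simp
    then show ?thesis using c(2) by (simp add: ennreal_le_iff)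
  qed
  then have "(\<Sum>n<N. \<bar>u n\<bar>) \<le> sqrt c" for N by (simp add: real_le_rsqrt)
  then show sx: "summable (\<lambda>n. \<bar>u n\<bar>)" by (intro summableI_nonneg_bounded) auto
  have "incseq (\<lambda>N. (\<Sum>n<N. \<bar>u n\<bar>)\<^sup>2)"
    by (auto simp: incseq_def intro!: power_mono sum_mono2)
  moreover have "(\<lambda>N. (\<Sum>n<N. \<bar>u n\<bar>)\<^sup>2) \<longlonglongrightarrow> (\<Sum>n. \<bar>u n\<bar>)\<^sup>2"
    by (intro tendsto_power summable_LIMSEQ sx)
  ultimately show "(SUP N. ennreal ((\<Sum>n<N. \<bar>u n\<bar>)\<^sup>2)) = ennreal ((\<Sum>n. \<bar>u n\<bar>)\<^sup>2)"
    by (rule SUP_ennreal_incseq)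
qed

text \<open>The Riesz--Fischer argument: monotone convergence for the partial sums of \<open>\<Sum>\<^sub>n \<bar>u\<^sub>n\<bar>\<close>.\<close>

lemma L2_series_abs_bound:
  assumes u: "\<And>n. u n \<in> L2 M" and sm: "summable (\<lambda>n. L2_norm M (u n))"
  shows "AE x in M. summable (\<lambda>n. \<bar>u n x\<bar>)"
    and "(\<integral>\<^sup>+x. ennreal ((\<Sum>n. \<bar>u n x\<bar>)\<^sup>2) \<partial>M) \<le> ennreal ((\<Sum>n. L2_norm M (u n))\<^sup>2)"
proof -
  define S where "S = (\<Sum>n. L2_norm M (u n))"
  define F where "F N x = ennreal ((\<Sum>n<N. \<bar>u n x\<bar>)\<^sup>2)" for N x
  have PL: "(\<lambda>x. \<Sum>n<N. \<bar>u n x\<bar>) \<in> L2 M" for N using L2_norm_sum_abs_le[of u, OF u] by blast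
  have meas: "(\<lambda>x. \<Sum>n<N. \<bar>u n x\<bar>) \<in> borel_measurable M" for N using PL[of N] unfolding L2_def by auto
  have "incseq F" unfolding F_def incseq_def le_fun_def
    by (auto intro!: ennreal_leI power_mono sum_mono2)
  then have "(\<integral>\<^sup>+x. (SUP N. F N x) \<partial>M) = (SUP N. \<integral>\<^sup>+x. F N x \<partial>M)"
    using meas unfolding F_def by (intro nn_integral_monotone_convergence_SUP) auto
  also have "\<dots> \<le> ennreal (S\<^sup>2)"
  proof (rule SUP_least)
    fix N
    have "L2_norm M (\<lambda>x. \<Sum>n<N. \<bar>u n x\<bar>) \<le> (\<Sum>n<N. L2_norm M (u n))"
      using L2_norm_sum_abs_le[of u, OF u] by blast
    also have "\<dots> \<le> S" unfolding S_def using sm by (intro sum_le_suminf) (auto simp: L2_norm_nonneg)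
    finally show "(\<integral>\<^sup>+x. F N x \<partial>M) \<le> ennreal (S\<^sup>2)"
      unfolding F_def nn_integral_power2_eq_L2_norm[OF PL]
      by (intro ennreal_leI power_mono) (auto simp: L2_norm_nonneg)
  qed
  finally have FB: "(\<integral>\<^sup>+x. (SUP N. F N x) \<partial>M) \<le> ennreal (S\<^sup>2)" .
  have "AE x in M. (SUP N. F N x) \<noteq> \<infinity>"
    using FB meas unfolding F_def by (intro nn_integral_PInf_AE) (auto simp: top_unique)
  then have good: "AE x in M. summable (\<lambda>n. \<bar>u n x\<bar>) \<and> (SUP N. F N x) = ennreal ((\<Sum>n. \<bar>u n x\<bar>)\<^sup>2)"
    unfolding F_def
  proof eventually_elim
    case (elim x)
    show ?case using SUP_ennreal_power2_sum_abs[of "\<lambda>n. u n x", OF elim] by simp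
  qed
  then show "AE x in M. summable (\<lambda>n. \<bar>u n x\<bar>)" by auto
  have "(\<integral>\<^sup>+x. ennreal ((\<Sum>n. \<bar>u n x\<bar>)\<^sup>2) \<partial>M) = (\<integral>\<^sup>+x. (SUP N. F N x) \<partial>M)"
    using good by (intro nn_integral_cong_AE) auto
  with FB show "(\<integral>\<^sup>+x. ennreal ((\<Sum>n. \<bar>u n x\<bar>)\<^sup>2) \<partial>M) \<le> ennreal ((\<Sum>n. L2_norm M (u n))\<^sup>2)"
    unfolding S_def by simp
qed

lemma L2_suminf:
  assumes u: "\<And>n. u n \<in> L2 M" and sm: "summable (\<lambda>n. L2_norm M (u n))"
  shows "(\<lambda>x. \<Sum>n. u n x) \<in> L2 M" and "L2_norm M (\<lambda>x. \<Sum>n. u n x) \<le> (\<Sum>n. L2_norm M (u n))"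
proof -
  have [measurable]: "u n \<in> borel_measurable M" for n using u unfolding L2_def by auto
  have "AE x in M. ennreal ((\<Sum>n. u n x)\<^sup>2) \<le> ennreal ((\<Sum>n. \<bar>u n x\<bar>)\<^sup>2)"
    using L2_series_abs_bound(1)[OF u sm]
  proof eventually_elim
    case (elim x)
    then have "\<bar>\<Sum>n. u n x\<bar> \<le> (\<Sum>n. \<bar>u n x\<bar>)" by (rule summable_rabs)
    then show ?case by (intro ennreal_leI) (metis abs_ge_zero power2_abs power_mono)
  qed
  then have "(\<integral>\<^sup>+x. ennreal ((\<Sum>n. u n x)\<^sup>2) \<partial>M) \<le> (\<integral>\<^sup>+x. ennreal ((\<Sum>n. \<bar>u n x\<bar>)\<^sup>2) \<partial>M)"
    by (rule nn_integral_mono_AE)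
  also have "\<dots> \<le> ennreal ((\<Sum>n. L2_norm M (u n))\<^sup>2)" by (rule L2_series_abs_bound(2)[OF u sm])
  finally have I: "(\<integral>\<^sup>+x. ennreal ((\<Sum>n. u n x)\<^sup>2) \<partial>M) \<le> ennreal ((\<Sum>n. L2_norm M (u n))\<^sup>2)" .
  have S0: "0 \<le> (\<Sum>n. L2_norm M (u n))" using sm by (intro suminf_nonneg) (auto simp: L2_norm_nonneg)
  have meas: "(\<lambda>x. \<Sum>n. u n x) \<in> borel_measurable M" by measurable
  show "(\<lambda>x. \<Sum>n. u n x) \<in> L2 M" using L2_of_nn_integral_power2_le(1)[OF meas I] S0 by simp
  show "L2_norm M (\<lambda>x. \<Sum>n. u n x) \<le> (\<Sum>n. L2_norm M (u n))"
    using L2_of_nn_integral_power2_le(2)[OF meas I] S0 by simp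
qed

lemma (in prob_space) L2_0_series_converges:
  assumes h: "\<And>n. h n \<in> L2_0 M" and sm: "summable (\<lambda>n. L2_norm M (h n))"
  shows "\<exists>s \<in> L2_0 M. \<forall>N. L2_norm M (\<lambda>x. s x - (\<Sum>n<N. h n x)) \<le> (\<Sum>n. L2_norm M (h (n + N)))"
proof -
  have hL: "h n \<in> L2 M" for n using h by (rule L2_0_imp_L2)
  have [measurable]: "h n \<in> borel_measurable M" for n using h by (rule L2_0_measurable)
  define s where "s x = (\<Sum>n. h n x)" for x
  have tail: "L2_norm M (\<lambda>x. s x - (\<Sum>n<N. h n x)) \<le> (\<Sum>n. L2_norm M (h (n + N)))"
    and tail_L2: "(\<lambda>x. s x - (\<Sum>n<N. h n x)) \<in> L2 M" for N
  proof -
    have smN: "summable (\<lambda>n. L2_norm M (h (n + N)))" using summable_ignore_initial_segment[OF sm] .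
    have ae: "AE x in M. (\<Sum>n. h (n + N) x) = s x - (\<Sum>n<N. h n x)"
      using L2_series_abs_bound(1)[OF hL sm]
    proof eventually_elim
      case (elim x)
      then have "summable (\<lambda>n. h n x)" by (rule summable_rabs_cancel)
      then show ?case unfolding s_def by (rule suminf_minus_initial_segment)
    qed
    have meas: "(\<lambda>x. s x - (\<Sum>n<N. h n x)) \<in> borel_measurable M" unfolding s_def by measurable
    note S = L2_suminf[of "\<lambda>n. h (n + N)", OF hL smN]
    have "(\<lambda>x. \<Sum>n. h (n + N) x) \<in> borel_measurable M" using S(1) by (simp add: L2_def)
    from L2_norm_cong_AE[OF this meas ae] S(2)
    show "L2_norm M (\<lambda>x. s x - (\<Sum>n<N. h n x)) \<le> (\<Sum>n. L2_norm M (h (n + N)))" by simp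
    show "(\<lambda>x. s x - (\<Sum>n<N. h n x)) \<in> L2 M" by (rule L2_cong_AE[OF S(1) meas ae])
  qed
  have sL: "s \<in> L2 M" using tail_L2[of 0] by simp
  have "\<bar>\<integral>x. s x \<partial>M\<bar> \<le> (\<Sum>n. L2_norm M (h (n + N)))" for N
  proof -
    have "(\<integral>x. s x - (\<Sum>n<N. h n x) \<partial>M) = (\<integral>x. s x \<partial>M)"
      using h L2_integrable[OF sL] L2_integrable[OF hL] by (simp add: integral_sum L2_0_def)
    then show ?thesis using abs_integral_le_L2_norm[OF tail_L2[of N]] tail[of N] by simp
  qed
  then have "\<bar>\<integral>x. s x \<partial>M\<bar> \<le> 0"
    by (intro LIMSEQ_le_const[OF suminf_exist_split2[OF sm]]) auto
  then have "s \<in> L2_0 M" using sL unfolding L2_0_def L2_def by auto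
  then show ?thesis using tail by blast
qed

section \<open>Operators on \<open>L\<^sup>2\<^sub>0\<close>\<close>

text \<open>Operators are arbitrary maps on functions; they are only constrained on \<open>L\<^sup>2\<^sub>0(M)\<close>,
  and identities between functions hold almost everywhere, mirroring \<^const>\<open>spectrum0\<close>.\<close>

definition L2_0_linear :: "'a measure \<Rightarrow> (('a \<Rightarrow> real) \<Rightarrow> ('a \<Rightarrow> real)) \<Rightarrow> bool" where
  "L2_0_linear M B \<longleftrightarrow> (\<forall>f\<in>L2_0 M. B f \<in> L2_0 M) \<and>
     (\<forall>f\<in>L2_0 M. \<forall>g\<in>L2_0 M. \<forall>a b. AE x in M. B (\<lambda>x. a * f x + b * g x) x = a * B f x + b * B g x)"

definition L2_0_bounded :: "'a measure \<Rightarrow> (('a \<Rightarrow> real) \<Rightarrow> ('a \<Rightarrow> real)) \<Rightarrow> real \<Rightarrow> bool" where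
  "L2_0_bounded M B C \<longleftrightarrow> (\<forall>f\<in>L2_0 M. L2_norm M (B f) \<le> C * L2_norm M f)"

definition L2_0_symmetric :: "'a measure \<Rightarrow> (('a \<Rightarrow> real) \<Rightarrow> ('a \<Rightarrow> real)) \<Rightarrow> bool" where
  "L2_0_symmetric M B \<longleftrightarrow> (\<forall>f\<in>L2_0 M. \<forall>g\<in>L2_0 M. L2_inner M (B f) g = L2_inner M f (B g))"

definition L2_0_bijective :: "'a measure \<Rightarrow> (('a \<Rightarrow> real) \<Rightarrow> ('a \<Rightarrow> real)) \<Rightarrow> bool" where
  "L2_0_bijective M D \<longleftrightarrow> (\<forall>f\<in>L2_0 M. (AE x in M. D f x = 0) \<longrightarrow> (AE x in M. f x = 0)) \<and>
     (\<forall>g\<in>L2_0 M. \<exists>f\<in>L2_0 M. AE x in M. D f x = g x)"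

definition L2_0_spectrum :: "'a measure \<Rightarrow> (('a \<Rightarrow> real) \<Rightarrow> ('a \<Rightarrow> real)) \<Rightarrow> real set" where
  "L2_0_spectrum M B = {l. \<not> L2_0_bijective M (\<lambda>f x. B f x - l * f x)}"

definition numerical_range :: "'a measure \<Rightarrow> (('a \<Rightarrow> real) \<Rightarrow> ('a \<Rightarrow> real)) \<Rightarrow> real set" where
  "numerical_range M B = {L2_inner M (B g) g | g. g \<in> L2_0 M \<and> L2_norm M g = 1}"

lemma spectrum0_eq_L2_0_spectrum: "spectrum0 M K = L2_0_spectrum M (kop K)"
  unfolding spectrum0_def L2_0_spectrum_def L2_0_bijective_def by simp

lemma L2_0_linear_closed: "L2_0_linear M B \<Longrightarrow> f \<in> L2_0 M \<Longrightarrow> B f \<in> L2_0 M"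
  unfolding L2_0_linear_def by auto

lemma L2_0_linear_lincomb_AE: "L2_0_linear M B \<Longrightarrow> f \<in> L2_0 M \<Longrightarrow> g \<in> L2_0 M \<Longrightarrow>
   AE x in M. B (\<lambda>x. a * f x + b * g x) x = a * B f x + b * B g x"
  unfolding L2_0_linear_def by auto

lemma L2_0_boundedD: "L2_0_bounded M B C \<Longrightarrow> f \<in> L2_0 M \<Longrightarrow> L2_norm M (B f) \<le> C * L2_norm M f"
  unfolding L2_0_bounded_def by auto

lemma L2_0_symmetricD: "L2_0_symmetric M B \<Longrightarrow> f \<in> L2_0 M \<Longrightarrow> g \<in> L2_0 M \<Longrightarrow>
   L2_inner M (B f) g = L2_inner M f (B g)"
  unfolding L2_0_symmetric_def by auto

context prob_space
begin

lemma L2_inner_linear_lincomb_left: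
  assumes B: "L2_0_linear M B" and f: "f \<in> L2_0 M" and g: "g \<in> L2_0 M" and h: "h \<in> L2 M"
  shows "L2_inner M (B (\<lambda>x. a * f x + b * g x)) h = a * L2_inner M (B f) h + b * L2_inner M (B g) h"
proof -
  have c: "(\<lambda>x. a * f x + b * g x) \<in> L2_0 M" using L2_0_lincomb[OF f g] .
  have "L2_inner M (B (\<lambda>x. a * f x + b * g x)) h = L2_inner M (\<lambda>x. a * B f x + b * B g x) h"
    using L2_0_linear_lincomb_AE[OF B f g, of a b] L2_0_linear_closed[OF B c] L2_0_lincomb[OF L2_0_linear_closed[OF B f] L2_0_linear_closed[OF B g], of a b] h
    by (intro L2_inner_cong_AE) (auto simp: L2_0_measurable L2_def)
  also have "\<dots> = a * L2_inner M (B f) h + b * L2_inner M (B g) h"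
    using L2_0_linear_closed[OF B f] L2_0_linear_closed[OF B g] h by (intro L2_inner_lincomb_left) (auto simp: L2_0_imp_L2)
  finally show ?thesis .
qed


lemma L2_0_linear_shift:
  assumes "L2_0_linear M B"
  shows "L2_0_linear M (\<lambda>f x. B f x - c * f x)"
  unfolding L2_0_linear_def
proof (intro conjI ballI allI)
  fix f assume f: "f \<in> L2_0 M"
  show "(\<lambda>x. B f x - c * f x) \<in> L2_0 M"
    using L2_0_lincomb[OF L2_0_linear_closed[OF assms f] f, of 1 "-c"] by simp
next
  fix f g a b assume f: "f \<in> L2_0 M" and g: "g \<in> L2_0 M"
  show "AE x in M. B (\<lambda>x. a * f x + b * g x) x - c * (a * f x + b * g x) =
      a * (B f x - c * f x) + b * (B g x - c * g x)"
    using L2_0_linear_lincomb_AE[OF assms f g, of a b] by eventually_elim (simp add: algebra_simps)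
qed

lemma L2_0_bounded_shift:
  assumes "L2_0_linear M B" "L2_0_bounded M B C"
  shows "L2_0_bounded M (\<lambda>f x. B f x - c * f x) (C + \<bar>c\<bar>)"
  unfolding L2_0_bounded_def
proof
  fix f assume f: "f \<in> L2_0 M"
  have "L2_norm M (\<lambda>x. 1 * B f x + (-c) * f x) \<le> \<bar>1\<bar> * L2_norm M (B f) + \<bar>-c\<bar> * L2_norm M f"
    using L2_0_linear_closed[OF assms(1) f] f by (intro L2_norm_lincomb_le) (auto simp: L2_0_imp_L2)
  also have "\<dots> \<le> C * L2_norm M f + \<bar>c\<bar> * L2_norm M f" using assms(2) f unfolding L2_0_bounded_def by auto
  finally show "L2_norm M (\<lambda>x. B f x - c * f x) \<le> (C + \<bar>c\<bar>) * L2_norm M f" by (simp add: algebra_simps)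
qed

lemma L2_0_symmetric_shift:
  assumes "L2_0_linear M B" "L2_0_symmetric M B"
  shows "L2_0_symmetric M (\<lambda>f x. B f x - c * f x)"
  unfolding L2_0_symmetric_def
proof (intro ballI)
  fix f g assume f: "f \<in> L2_0 M" and g: "g \<in> L2_0 M"
  have "L2_inner M (\<lambda>x. 1 * B f x + (-c) * f x) g = L2_inner M (B f) g - c * L2_inner M f g"
    using L2_0_linear_closed[OF assms(1) f] f g by (subst L2_inner_lincomb_left) (auto simp: L2_0_imp_L2)
  moreover have "L2_inner M f (\<lambda>x. 1 * B g x + (-c) * g x) = L2_inner M f (B g) - c * L2_inner M f g"
    using L2_0_linear_closed[OF assms(1) g] f g by (subst L2_inner_lincomb_right) (auto simp: L2_0_imp_L2)
  ultimately show "L2_inner M (\<lambda>x. B f x - c * f x) g = L2_inner M f (\<lambda>x. B g x - c * g x)"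
    using assms(2) f g unfolding L2_0_symmetric_def by simp
qed

lemma L2_0_linear_uminus:
  assumes "L2_0_linear M B"
  shows "L2_0_linear M (\<lambda>f x. - B f x)"
  unfolding L2_0_linear_def
proof (intro conjI ballI allI)
  fix f assume f: "f \<in> L2_0 M"
  show "(\<lambda>x. - B f x) \<in> L2_0 M"
    using L2_0_lincomb[OF L2_0_linear_closed[OF assms f] f, of "-1" 0] by simp
next
  fix f g a b assume f: "f \<in> L2_0 M" and g: "g \<in> L2_0 M"
  show "AE x in M. - B (\<lambda>x. a * f x + b * g x) x = a * (- B f x) + b * (- B g x)"
    using L2_0_linear_lincomb_AE[OF assms f g, of a b] by eventually_elim (simp add: algebra_simps)
qed
lemma L2_0_bounded_uminus: "L2_0_linear M B \<Longrightarrow> L2_0_bounded M B C \<Longrightarrow> L2_0_bounded M (\<lambda>f x. - B f x) C"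
  unfolding L2_0_bounded_def by (metis L2_norm_uminus L2_0_linear_closed L2_0_imp_L2)

lemma L2_0_symmetric_uminus:
  assumes "L2_0_linear M B" "L2_0_symmetric M B"
  shows "L2_0_symmetric M (\<lambda>f x. - B f x)"
  unfolding L2_0_symmetric_def
proof (intro ballI)
  fix f g assume f: "f \<in> L2_0 M" and g: "g \<in> L2_0 M"
  have "L2_inner M (\<lambda>x. - B f x) g = - L2_inner M (B f) g"
    using L2_0_linear_closed[OF assms(1) f] g by (intro L2_inner_uminus_left) (auto simp: L2_0_imp_L2)
  moreover have "L2_inner M f (\<lambda>x. - B g x) = - L2_inner M f (B g)"
    using L2_0_linear_closed[OF assms(1) g] f L2_inner_uminus_left[of "B g" M f]
    by (simp add: L2_inner_commute L2_0_imp_L2)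
  ultimately show "L2_inner M (\<lambda>x. - B f x) g = L2_inner M f (\<lambda>x. - B g x)"
    using L2_0_symmetricD[OF assms(2) f g] by simp
qed

lemma L2_0_bijective_uminus:
  assumes b: "L2_0_bijective M D"
  shows "L2_0_bijective M (\<lambda>f x. - D f x)"
  unfolding L2_0_bijective_def
proof (intro conjI ballI impI)
  fix f assume "f \<in> L2_0 M" "AE x in M. - D f x = 0"
  then show "AE x in M. f x = 0" using b unfolding L2_0_bijective_def by auto
next
  fix g assume g: "g \<in> L2_0 M"
  have m: "(\<lambda>x. (-1) * g x + 0 * g x) \<in> L2_0 M" using L2_0_lincomb[OF g g] .
  have "\<forall>g\<in>L2_0 M. \<exists>f\<in>L2_0 M. AE x in M. D f x = g x" using b unfolding L2_0_bijective_def by (rule conjunct2)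
  then have "\<exists>f\<in>L2_0 M. AE x in M. D f x = (-1) * g x + 0 * g x" using m by (rule bspec)
  then obtain f where f: "f \<in> L2_0 M" "AE x in M. D f x = (-1) * g x + 0 * g x" by (rule bexE)
  have "AE x in M. - D f x = g x" using f(2) by eventually_elim simp
  then show "\<exists>f\<in>L2_0 M. AE x in M. - D f x = g x" using f(1) by blast
qed

lemma L2_0_bijective_uminus_iff: "L2_0_bijective M (\<lambda>f x. - D f x) \<longleftrightarrow> L2_0_bijective M D"
  using L2_0_bijective_uminus[of D] L2_0_bijective_uminus[of "\<lambda>f x. - D f x"] by auto

lemma L2_0_spectrum_uminus:
  "l \<in> L2_0_spectrum M (\<lambda>f x. - B f x) \<longleftrightarrow> - l \<in> L2_0_spectrum M B"
proof -
  have "(\<lambda>f x. - B f x - l * f x) = (\<lambda>f x. - (B f x - (- l) * f x))" by (simp add: fun_eq_iff)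
  then show ?thesis unfolding L2_0_spectrum_def mem_Collect_eq by (simp only: L2_0_bijective_uminus_iff)
qed

lemma L2_0_linear_zero_AE:
  assumes "L2_0_linear M E" shows "AE x in M. E (\<lambda>x. 0) x = 0"
  using L2_0_linear_lincomb_AE[OF assms L2_0_zero L2_0_zero, of 0 0] by simp

lemma L2_0_linear_sum_AE:
  fixes N :: nat
  assumes E: "L2_0_linear M E" and u: "\<And>n. u n \<in> L2_0 M"
  shows "AE x in M. E (\<lambda>x. \<Sum>n<N. u n x) x = (\<Sum>n<N. E (u n) x)"
proof (induction N)
  case 0 then show ?case using L2_0_linear_zero_AE[OF E] by simp
next
  case (Suc N)
  have "AE x in M. E (\<lambda>x. 1 * (\<Sum>n<N. u n x) + 1 * u N x) x = 1 * E (\<lambda>x. \<Sum>n<N. u n x) x + 1 * E (u N) x"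
    by (rule L2_0_linear_lincomb_AE[OF E L2_0_sum[OF u] u])
  with Suc show ?case by eventually_elim simp
qed

lemma L2_0_linear_scale_AE:
  assumes E: "L2_0_linear M E" and f: "f \<in> L2_0 M"
  shows "AE x in M. E (\<lambda>x. c * f x) x = c * E f x"
  using L2_0_linear_lincomb_AE[OF E f f, of c 0] by simp

lemma quadratic_form_lincomb:
  assumes B: "L2_0_linear M B" "L2_0_symmetric M B" and f: "f \<in> L2_0 M" and g: "g \<in> L2_0 M"
  shows "L2_inner M (B (\<lambda>x. 1 * f x + s * g x)) (\<lambda>x. 1 * f x + s * g x)
       = L2_inner M (B f) f + 2 * s * L2_inner M (B f) g + s\<^sup>2 * L2_inner M (B g) g"
proof -
  have w: "(\<lambda>x. 1 * f x + s * g x) \<in> L2 M" using L2_0_lincomb[OF f g] by (rule L2_0_imp_L2)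
  have Bf: "B f \<in> L2 M" "B g \<in> L2 M" using L2_0_linear_closed[OF B(1) f] L2_0_linear_closed[OF B(1) g] by (auto simp: L2_0_imp_L2)
  have "L2_inner M (B (\<lambda>x. 1 * f x + s * g x)) (\<lambda>x. 1 * f x + s * g x)
      = 1 * L2_inner M (B f) (\<lambda>x. 1 * f x + s * g x) + s * L2_inner M (B g) (\<lambda>x. 1 * f x + s * g x)"
    by (rule L2_inner_linear_lincomb_left[OF B(1) f g w])
  also have "\<dots> = (L2_inner M (B f) f + s * L2_inner M (B f) g) + s * (L2_inner M (B g) f + s * L2_inner M (B g) g)"
    using L2_inner_lincomb_right[of f M g "B f" 1 s] L2_inner_lincomb_right[of f M g "B g" 1 s] f g Bf
    by (simp add: L2_0_imp_L2)
  also have "L2_inner M (B g) f = L2_inner M (B f) g"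
    using B(2) f g unfolding L2_0_symmetric_def by (simp add: L2_inner_commute)
  finally show ?thesis by (simp add: power2_eq_square algebra_simps)
qed


lemma quadratic_form_scale:
  assumes B: "L2_0_linear M B" and f: "f \<in> L2_0 M"
  shows "L2_inner M (B (\<lambda>x. c * f x)) (\<lambda>x. c * f x) = c\<^sup>2 * L2_inner M (B f) f"
proof -
  have cf: "(\<lambda>x. c * f x) \<in> L2_0 M" by (rule L2_0_scale[OF f])
  have "L2_inner M (B (\<lambda>x. c * f x)) (\<lambda>x. c * f x) = L2_inner M (\<lambda>x. c * B f x) (\<lambda>x. c * f x)"
    using L2_0_linear_scale_AE[OF B f, of c] L2_0_linear_closed[OF B cf] L2_0_scale[OF L2_0_linear_closed[OF B f], of c] cf
    by (intro L2_inner_cong_AE) (auto simp: L2_0_measurable)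
  also have "\<dots> = c * L2_inner M (B f) (\<lambda>x. c * f x)"
    using L2_inner_lincomb_left[OF L2_0_imp_L2[OF L2_0_linear_closed[OF B f]] L2_0_imp_L2[OF L2_0_linear_closed[OF B f]] L2_0_imp_L2[OF cf], of c 0] by simp
  also have "L2_inner M (B f) (\<lambda>x. c * f x) = c * L2_inner M (B f) f"
    using L2_inner_lincomb_right[OF L2_0_imp_L2[OF f] L2_0_imp_L2[OF f] L2_0_imp_L2[OF L2_0_linear_closed[OF B f]], of c 0] by simp
  finally show ?thesis by (simp add: power2_eq_square)
qed


lemma quadratic_form_shift:
  assumes "L2_0_linear M B" "f \<in> L2_0 M"
  shows "L2_inner M (\<lambda>x. B f x - c * f x) f = L2_inner M (B f) f - c * (L2_norm M f)\<^sup>2"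
  using L2_inner_lincomb_left[of "B f" M f f 1 "-c"] L2_0_linear_closed[OF assms] assms(2)
  by (simp add: L2_norm_power2 L2_0_imp_L2)

lemma quadratic_form_uminus:
  assumes "L2_0_linear M B" "f \<in> L2_0 M"
  shows "L2_inner M (\<lambda>x. - B f x) f = - L2_inner M (B f) f"
  using L2_0_linear_closed[OF assms] assms(2) by (intro L2_inner_uminus_left) (auto simp: L2_0_imp_L2)

lemma abs_quadratic_form_le:
  assumes "L2_0_linear M B" "L2_0_bounded M B C" "f \<in> L2_0 M"
  shows "\<bar>L2_inner M (B f) f\<bar> \<le> \<bar>C\<bar> * (L2_norm M f)\<^sup>2"
proof -
  have "\<bar>L2_inner M (B f) f\<bar> \<le> L2_norm M (B f) * L2_norm M f"
    using L2_0_linear_closed[OF assms(1,3)] assms(3) by (intro L2_Cauchy_Schwarz) (auto simp: L2_0_imp_L2)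
  also have "\<dots> \<le> (\<bar>C\<bar> * L2_norm M f) * L2_norm M f"
  proof (intro mult_right_mono)
    have "L2_norm M (B f) \<le> C * L2_norm M f" by (rule L2_0_boundedD[OF assms(2,3)])
    also have "\<dots> \<le> \<bar>C\<bar> * L2_norm M f" by (intro mult_right_mono) (auto simp: L2_norm_nonneg)
    finally show "L2_norm M (B f) \<le> \<bar>C\<bar> * L2_norm M f" .
  qed (simp add: L2_norm_nonneg)
  finally show ?thesis by (simp add: power2_eq_square)
qed

lemma Cauchy_Schwarz_nonneg_operator:
  assumes A: "L2_0_linear M A" "L2_0_symmetric M A" and pos: "\<And>u. u \<in> L2_0 M \<Longrightarrow> 0 \<le> L2_inner M (A u) u"
    and u: "u \<in> L2_0 M" and v: "v \<in> L2_0 M"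
  shows "(L2_inner M (A u) v)\<^sup>2 \<le> L2_inner M (A u) u * L2_inner M (A v) v"
proof (rule quadratic_nonneg_imp_discriminant)
  fix t
  have "0 \<le> L2_inner M (A (\<lambda>x. 1 * u x + (-t) * v x)) (\<lambda>x. 1 * u x + (-t) * v x)"
    by (rule pos[OF L2_0_lincomb[OF u v]])
  also have "\<dots> = L2_inner M (A u) u - 2 * t * L2_inner M (A u) v + t\<^sup>2 * L2_inner M (A v) v"
    using quadratic_form_lincomb[OF A u v, of "-t"] by simp
  finally show "0 \<le> L2_inner M (A u) u - 2 * t * L2_inner M (A u) v + t\<^sup>2 * L2_inner M (A v) v" .
qed (rule pos[OF v])

lemma L2_inner_le_of_numerical_radius:
  assumes B: "L2_0_linear M B" "L2_0_symmetric M B"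
    and num: "\<And>f. f \<in> L2_0 M \<Longrightarrow> \<bar>L2_inner M (B f) f\<bar> \<le> \<rho> * (L2_norm M f)\<^sup>2"
    and f: "f \<in> L2_0 M" and g: "g \<in> L2_0 M"
  shows "2 * t * L2_inner M (B f) g \<le> \<rho> * ((L2_norm M f)\<^sup>2 + t\<^sup>2 * (L2_norm M g)\<^sup>2)"
proof -
  have norm: "(L2_norm M (\<lambda>x. 1 * f x + s * g x))\<^sup>2
      = (L2_norm M f)\<^sup>2 + 2 * s * L2_inner M f g + s\<^sup>2 * (L2_norm M g)\<^sup>2" for s
    using L2_inner_lincomb_self[OF L2_0_imp_L2[OF f] L2_0_imp_L2[OF g], of 1 s] by (simp add: L2_norm_power2)
  have "4 * t * L2_inner M (B f) g = L2_inner M (B (\<lambda>x. 1 * f x + t * g x)) (\<lambda>x. 1 * f x + t * g x)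
      - L2_inner M (B (\<lambda>x. 1 * f x + (-t) * g x)) (\<lambda>x. 1 * f x + (-t) * g x)"
    using quadratic_form_lincomb[OF B f g, of t] quadratic_form_lincomb[OF B f g, of "-t"] by simp
  also have "\<dots> \<le> \<rho> * (L2_norm M (\<lambda>x. 1 * f x + t * g x))\<^sup>2 + \<rho> * (L2_norm M (\<lambda>x. 1 * f x + (-t) * g x))\<^sup>2"
    using num[OF L2_0_lincomb[OF f g, of 1 t]] num[OF L2_0_lincomb[OF f g, of 1 "-t"]] by (simp add: abs_le_iff)
  also have "\<dots> = 2 * \<rho> * ((L2_norm M f)\<^sup>2 + t\<^sup>2 * (L2_norm M g)\<^sup>2)" unfolding norm by (simp add: algebra_simps)
  finally show ?thesis by simp
qed

text \<open>For symmetric operators the numerical radius is the norm: take \<open>g = B f\<close> and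
  \<open>t = \<parallel>f\<parallel> / \<parallel>B f\<parallel>\<close> above.\<close>

lemma L2_0_bounded_of_numerical_radius:
  assumes B: "L2_0_linear M B" "L2_0_bounded M B C" "L2_0_symmetric M B"
    and num: "\<And>f. f \<in> L2_0 M \<Longrightarrow> \<bar>L2_inner M (B f) f\<bar> \<le> \<rho> * (L2_norm M f)\<^sup>2"
  shows "L2_0_bounded M B \<rho>"
  unfolding L2_0_bounded_def
proof
  fix f assume f: "f \<in> L2_0 M"
  define a where "a = L2_norm M f"
  define b where "b = L2_norm M (B f)"
  have ab: "0 \<le> a" "0 \<le> b" unfolding a_def b_def by (auto simp: L2_norm_nonneg)
  show "L2_norm M (B f) \<le> \<rho> * L2_norm M f" unfolding a_def[symmetric] b_def[symmetric]
  proof (cases "a = 0 \<or> b = 0")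
    case True
    have "0 \<le> \<rho> * a\<^sup>2" using num[OF f] unfolding a_def by (meson abs_ge_zero order_trans)
    have "0 \<le> \<rho> * a"
    proof (cases "a = 0")
      case False
      then have "0 < a\<^sup>2" by simp
      with \<open>0 \<le> \<rho> * a\<^sup>2\<close> have "0 \<le> \<rho>" by (simp add: zero_le_mult_iff)
      then show ?thesis using ab by simp
    qed simp
    moreover have "b = 0" if "a = 0"
      using L2_0_boundedD[OF B(2) f] L2_norm_nonneg[of M "B f"] that unfolding a_def b_def by simp
    ultimately show "b \<le> \<rho> * a" using True by auto
  next
    case False
    then have pos: "0 < a" "0 < b" using ab by auto
    have "2 * (a / b) * b\<^sup>2 \<le> \<rho> * (a\<^sup>2 + (a / b)\<^sup>2 * b\<^sup>2)"
      using L2_inner_le_of_numerical_radius[OF B(1,3) num f L2_0_linear_closed[OF B(1) f], of "a / b"]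
      unfolding a_def b_def by (simp add: L2_norm_power2)
    then have "2 * a * b \<le> 2 * \<rho> * a\<^sup>2" using pos by (simp add: power2_eq_square field_simps)
    then show "b \<le> \<rho> * a" using pos by (simp add: power2_eq_square)
  qed
qed

lemma L2_norm_linear_scale:
  assumes "L2_0_linear M S" "f \<in> L2_0 M"
  shows "L2_norm M (S (\<lambda>x. c * f x)) = \<bar>c\<bar> * L2_norm M (S f)"
proof -
  have "L2_norm M (S (\<lambda>x. c * f x)) = L2_norm M (\<lambda>x. c * S f x)"
    using L2_0_linear_scale_AE[OF assms] L2_0_linear_closed[OF assms(1) L2_0_scale[OF assms(2)]]
      L2_0_scale[OF L2_0_linear_closed[OF assms]]
    by (intro L2_norm_cong_AE) (auto simp: L2_0_measurable)
  also have "\<dots> = \<bar>c\<bar> * L2_norm M (S f)"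
    using L2_0_linear_closed[OF assms] by (simp add: L2_norm_scale L2_0_imp_L2)
  finally show ?thesis .
qed

lemma L2_0_normalize:
  assumes "f \<in> L2_0 M" "0 < L2_norm M f"
  shows "(\<lambda>x. (1 / L2_norm M f) * f x) \<in> L2_0 M" "L2_norm M (\<lambda>x. (1 / L2_norm M f) * f x) = 1"
   apply (rule L2_0_scale[OF assms(1)])
  using L2_norm_scale[OF L2_0_imp_L2[OF assms(1)], of "1 / L2_norm M f"] assms(2) by simp

section \<open>The Neumann series and spectral bounds from the quadratic form\<close>

lemma L2_0_shift_injective:
  assumes E: "L2_0_linear M E" "L2_0_bounded M E \<rho>" and \<mu>: "\<rho> < \<bar>\<mu>\<bar>"
    and f: "f \<in> L2_0 M" and z: "AE x in M. E f x - \<mu> * f x = 0"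
  shows "AE x in M. f x = 0"
proof -
  have "AE x in M. E f x = \<mu> * f x" using z by eventually_elim simp
  then have "L2_norm M (E f) = L2_norm M (\<lambda>x. \<mu> * f x)"
    using L2_0_linear_closed[OF E(1) f] L2_0_scale[OF f] by (intro L2_norm_cong_AE) (auto simp: L2_0_measurable)
  also have "\<dots> = \<bar>\<mu>\<bar> * L2_norm M f" using f by (simp add: L2_norm_scale L2_0_imp_L2)
  finally have "\<bar>\<mu>\<bar> * L2_norm M f \<le> \<rho> * L2_norm M f" using L2_0_boundedD[OF E(2) f] by simp
  then have "L2_norm M f = 0" using \<mu> L2_norm_nonneg[of M f]
    by (metis mult_le_cancel_right not_le order.strict_trans2 order_less_le)
  then show ?thesis using L2_norm_eq_0_iff[of f M] f by (simp add: L2_0_imp_L2)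
qed

lemma L2_0_funpow_bound:
  assumes E: "L2_0_linear M E" "L2_0_bounded M E \<rho>" and \<rho>: "0 \<le> \<rho>" and g: "g \<in> L2_0 M"
  shows "(E ^^ n) g \<in> L2_0 M \<and> L2_norm M ((E ^^ n) g) \<le> \<rho> ^ n * L2_norm M g"
proof (induction n)
  case (Suc n)
  then have "L2_norm M ((E ^^ Suc n) g) \<le> \<rho> * L2_norm M ((E ^^ n) g)"
    using L2_0_boundedD[OF E(2)] by simp
  also have "\<dots> \<le> \<rho> * (\<rho> ^ n * L2_norm M g)" using Suc \<rho> by (intro mult_left_mono) auto
  finally show ?case using Suc L2_0_linear_closed[OF E(1)] by simp
qed (simp add: g)

lemma L2_0_shift_eq_of_approx:
  assumes E: "L2_0_linear M E" "L2_0_bounded M E \<rho>" "0 \<le> \<rho>"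
    and s: "s \<in> L2_0 M" and g: "g \<in> L2_0 M" and S: "\<And>N. S N \<in> L2_0 M"
    and ES: "\<And>N. AE x in M. E (S N) x = \<mu> * S (Suc N) x + g x"
    and approx: "\<And>N. L2_norm M (\<lambda>x. s x - S N x) \<le> T N" and T: "T \<longlonglongrightarrow> 0"
  shows "AE x in M. E s x - \<mu> * s x = g x"
proof -
  have dL: "(\<lambda>x. s x - S N x) \<in> L2_0 M" for N using L2_0_diff[OF s S] .
  define R where "R = (\<lambda>x. E s x - \<mu> * s x - g x)"
  have RL: "R \<in> L2_0 M" unfolding R_def
    using L2_0_diff[OF L2_0_diff[OF L2_0_linear_closed[OF E(1) s] L2_0_scale[OF s]] g] .
  have "L2_norm M R \<le> \<rho> * T N + \<bar>\<mu>\<bar> * T (Suc N)" for N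
  proof -
    have "AE x in M. E s x = E (\<lambda>x. s x - S N x) x + E (S N) x"
      using L2_0_linear_lincomb_AE[OF E(1) dL[of N] S[of N], of 1 1] by simp
    with ES[of N] have "AE x in M. R x = 1 * E (\<lambda>x. s x - S N x) x + (-\<mu>) * (s x - S (Suc N) x)"
      unfolding R_def by eventually_elim (simp add: algebra_simps)
    then have "L2_norm M R = L2_norm M (\<lambda>x. 1 * E (\<lambda>x. s x - S N x) x + (-\<mu>) * (s x - S (Suc N) x))"
      using RL L2_0_lincomb[OF L2_0_linear_closed[OF E(1) dL[of N]] dL[of "Suc N"], of 1 "-\<mu>"]
      by (intro L2_norm_cong_AE) (auto simp: L2_0_measurable)
    also have "\<dots> \<le> L2_norm M (E (\<lambda>x. s x - S N x)) + \<bar>\<mu>\<bar> * L2_norm M (\<lambda>x. s x - S (Suc N) x)"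
      using L2_norm_lincomb_le[of "E (\<lambda>x. s x - S N x)" M "\<lambda>x. s x - S (Suc N) x" 1 "-\<mu>"]
        L2_0_linear_closed[OF E(1) dL[of N]] dL[of "Suc N"] by (simp add: L2_0_imp_L2)
    also have "\<dots> \<le> \<rho> * T N + \<bar>\<mu>\<bar> * T (Suc N)"
      using L2_0_boundedD[OF E(2) dL[of N]] mult_left_mono[OF approx[of N] E(3)]
        mult_left_mono[OF approx[of "Suc N"], of "\<bar>\<mu>\<bar>"] by simp
    finally show ?thesis .
  qed
  moreover have "(\<lambda>N. \<rho> * T N + \<bar>\<mu>\<bar> * T (Suc N)) \<longlonglongrightarrow> 0"
    using tendsto_add[OF tendsto_mult_right_zero[OF T] tendsto_mult_right_zero[OF LIMSEQ_Suc[OF T]]]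
    by (simp add: mult.commute)
  ultimately have "AE x in M. R x = 0" using RL by (intro AE_zero_of_L2_norm_le_tendsto_0) (auto simp: L2_0_imp_L2)
  then show ?thesis unfolding R_def by eventually_elim simp
qed

lemma L2_0_neumann_partial_sums:
  assumes E: "L2_0_linear M E" and \<mu>: "\<mu> \<noteq> 0" and pow: "\<And>n. (E ^^ n) g \<in> L2_0 M"
  defines "S N \<equiv> \<lambda>x. \<Sum>n<N. - (1 / \<mu> ^ Suc n) * (E ^^ n) g x"
  shows "AE x in M. E (S N) x = \<mu> * S (Suc N) x + g x"
proof -
  have "AE x in M. E (S N) x = (\<Sum>n<N. E (\<lambda>x. - (1 / \<mu> ^ Suc n) * (E ^^ n) g x) x)"
    unfolding S_def by (rule L2_0_linear_sum_AE[OF E L2_0_scale[OF pow]])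
  moreover have "AE x in M. \<forall>n. E (\<lambda>x. - (1 / \<mu> ^ Suc n) * (E ^^ n) g x) x = - (1 / \<mu> ^ Suc n) * (E ^^ Suc n) g x"
    unfolding AE_all_countable
    using L2_0_linear_scale_AE[OF E, of "(E ^^ _) g" "- (1 / \<mu> ^ Suc _)"] pow by simp
  ultimately show ?thesis
  proof eventually_elim
    case (elim x)
    have "\<mu> * S (Suc N) x = (\<Sum>n<Suc N. - (1 / \<mu> ^ n) * (E ^^ n) g x)"
      unfolding S_def sum_distrib_left using \<mu> by (intro sum.cong) (auto simp: field_simps)
    also have "\<dots> = - g x + (\<Sum>n<N. - (1 / \<mu> ^ Suc n) * (E ^^ Suc n) g x)"
      unfolding sum.lessThan_Suc_shift by simp
    finally show ?case using elim by simp
  qed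
qed

text \<open>Neumann series: \<open>f = - \<Sum>\<^sub>n \<mu>\<^sup>-\<^sup>n\<^sup>-\<^sup>1 E\<^sup>n g\<close> solves \<open>E f - \<mu> f = g\<close>.\<close>

lemma L2_0_shift_surjective:
  assumes E: "L2_0_linear M E" "L2_0_bounded M E \<rho>" and \<rho>: "0 \<le> \<rho>" "\<rho> < \<bar>\<mu>\<bar>" and g: "g \<in> L2_0 M"
  shows "\<exists>f\<in>L2_0 M. AE x in M. E f x - \<mu> * f x = g x"
proof -
  have \<mu>0: "\<mu> \<noteq> 0" using \<rho> by auto
  define h where "h n = (\<lambda>x. - (1 / \<mu> ^ Suc n) * (E ^^ n) g x)" for n
  note pow = L2_0_funpow_bound[OF E \<rho>(1) g]
  have hL: "h n \<in> L2_0 M" for n unfolding h_def using L2_0_scale pow by blast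
  have hn: "L2_norm M (h n) \<le> (L2_norm M g / \<bar>\<mu>\<bar>) * (\<rho> / \<bar>\<mu>\<bar>) ^ n" for n
  proof -
    have "L2_norm M (h n) = \<bar>- (1 / \<mu> ^ Suc n)\<bar> * L2_norm M ((E ^^ n) g)"
      unfolding h_def using pow by (intro L2_norm_scale) (blast intro: L2_0_imp_L2)
    also have "\<bar>- (1 / \<mu> ^ Suc n)\<bar> = 1 / \<bar>\<mu>\<bar> ^ Suc n" by (simp add: power_abs abs_mult)
    also have "1 / \<bar>\<mu>\<bar> ^ Suc n * L2_norm M ((E ^^ n) g) \<le> (1 / \<bar>\<mu>\<bar> ^ Suc n) * (\<rho> ^ n * L2_norm M g)"
      using pow by (intro mult_left_mono) auto
    finally show ?thesis using \<mu>0 by (simp add: field_simps power_divide)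
  qed
  have sm: "summable (\<lambda>n. L2_norm M (h n))"
  proof (rule summable_comparison_test)
    show "\<exists>N. \<forall>n\<ge>N. norm (L2_norm M (h n)) \<le> (L2_norm M g / \<bar>\<mu>\<bar>) * (\<rho> / \<bar>\<mu>\<bar>) ^ n"
      using hn by (auto simp: L2_norm_nonneg)
    show "summable (\<lambda>n. (L2_norm M g / \<bar>\<mu>\<bar>) * (\<rho> / \<bar>\<mu>\<bar>) ^ n)"
      using \<rho> by (intro summable_mult summable_geometric) auto
  qed
  obtain s where s: "s \<in> L2_0 M"
    and tail: "\<And>N. L2_norm M (\<lambda>x. s x - (\<Sum>n<N. h n x)) \<le> (\<Sum>n. L2_norm M (h (n + N)))"
    using L2_0_series_converges[OF hL sm] by blast
  have "AE x in M. E s x - \<mu> * s x = g x"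
  proof (rule L2_0_shift_eq_of_approx[OF E \<rho>(1) s g])
    show "(\<lambda>x. \<Sum>n<N. h n x) \<in> L2_0 M" for N by (rule L2_0_sum[OF hL])
    show "AE x in M. E (\<lambda>x. \<Sum>n<N. h n x) x = \<mu> * (\<Sum>n<Suc N. h n x) + g x" for N
      unfolding h_def using L2_0_neumann_partial_sums[OF E(1) \<mu>0] pow by blast
  qed (fact tail, rule suminf_exist_split2[OF sm])
  then show ?thesis using s by blast
qed

lemma L2_0_bijective_shift:
  assumes "L2_0_linear M E" "L2_0_bounded M E \<rho>" "0 \<le> \<rho>" "\<rho> < \<bar>\<mu>\<bar>"
  shows "L2_0_bijective M (\<lambda>f x. E f x - \<mu> * f x)"
  unfolding L2_0_bijective_def
  using L2_0_shift_injective[OF assms(1,2,4)] L2_0_shift_surjective[OF assms] by blast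

lemma L2_0_spectrum_le_of_quadratic_form_le:
  assumes B: "L2_0_linear M B" "L2_0_bounded M B C" "L2_0_symmetric M B"
    and r: "\<And>f. f \<in> L2_0 M \<Longrightarrow> L2_inner M (B f) f \<le> r * (L2_norm M f)\<^sup>2"
    and l: "l \<in> L2_0_spectrum M B"
  shows "l \<le> r"
proof (rule ccontr)
  assume "\<not> l \<le> r"
  define lo where "lo = min (- \<bar>C\<bar>) r"
  define c where "c = (lo + r) / 2"
  define \<rho> where "\<rho> = (r - lo) / 2"
  have "\<rho> < l - c" using \<open>\<not> l \<le> r\<close> unfolding \<rho>_def c_def by (simp add: field_simps)
  moreover have "0 \<le> \<rho>" unfolding \<rho>_def lo_def by simp
  ultimately have \<rho>: "0 \<le> \<rho>" "\<rho> < \<bar>l - c\<bar>" by auto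
  have num: "\<bar>L2_inner M (\<lambda>x. B f x - c * f x) f\<bar> \<le> \<rho> * (L2_norm M f)\<^sup>2" if f: "f \<in> L2_0 M" for f
  proof -
    define n where "n = (L2_norm M f)\<^sup>2"
    have "lo * n \<le> - \<bar>C\<bar> * n" unfolding lo_def n_def by (intro mult_right_mono) auto
    also have "\<dots> \<le> L2_inner M (B f) f" using abs_quadratic_form_le[OF B(1,2) f] unfolding n_def by linarith
    finally have "lo * n \<le> L2_inner M (B f) f" .
    moreover have "L2_inner M (B f) f \<le> r * n" using r[OF f] unfolding n_def .
    moreover have "r * n = c * n + \<rho> * n" "lo * n = c * n - \<rho> * n"
      unfolding c_def \<rho>_def by (simp_all add: field_simps)
    ultimately show ?thesis unfolding quadratic_form_shift[OF B(1) f] n_def[symmetric] by linarith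
  qed
  have "L2_0_bounded M (\<lambda>f x. B f x - c * f x) \<rho>"
    using L2_0_linear_shift[OF B(1)] L2_0_bounded_shift[OF B(1,2)] L2_0_symmetric_shift[OF B(1,3)] num
    by (rule L2_0_bounded_of_numerical_radius)
  then have "L2_0_bijective M (\<lambda>f x. (B f x - c * f x) - (l - c) * f x)"
    using L2_0_linear_shift[OF B(1)] \<rho> by (intro L2_0_bijective_shift) auto
  then show False using l unfolding L2_0_spectrum_def by (simp add: algebra_simps)
qed

lemma L2_0_spectrum_ge_of_quadratic_form_ge:
  assumes B: "L2_0_linear M B" "L2_0_bounded M B C" "L2_0_symmetric M B"
    and r: "\<And>f. f \<in> L2_0 M \<Longrightarrow> r * (L2_norm M f)\<^sup>2 \<le> L2_inner M (B f) f"
    and l: "l \<in> L2_0_spectrum M B"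
  shows "r \<le> l"
proof -
  have "- l \<le> - r"
  proof (rule L2_0_spectrum_le_of_quadratic_form_le)
    show "L2_0_linear M (\<lambda>f x. - B f x)" "L2_0_bounded M (\<lambda>f x. - B f x) C" "L2_0_symmetric M (\<lambda>f x. - B f x)"
      using B by (auto intro: L2_0_linear_uminus L2_0_bounded_uminus L2_0_symmetric_uminus)
    show "L2_inner M (\<lambda>x. - B f x) f \<le> - r * (L2_norm M f)\<^sup>2" if "f \<in> L2_0 M" for f
      using r[OF that] quadratic_form_uminus[OF B(1) that] by simp
    show "- l \<in> L2_0_spectrum M (\<lambda>f x. - B f x)" using l by (simp add: L2_0_spectrum_uminus)
  qed
  then show ?thesis by simp
qed

section \<open>The Hellinger--Toeplitz theorem\<close>

lemma abs_add_sign_mult_ge: "0 \<le> t \<Longrightarrow> t \<le> \<bar>a + (if 0 \<le> a then 1 else -1) * t\<bar>"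
  for a t :: real
  by auto

lemma suminf_power_eighth_tail: "(\<Sum>n. (1/8::real) ^ (n + K) / 4) = (2/7) * (1/8) ^ K"
proof -
  have "(\<Sum>n. (1/8::real) ^ (n + K) / 4) = ((1/8) ^ K / 4) * (\<Sum>n. (1/8::real) ^ n)"
    by (subst suminf_mult[symmetric]) (auto simp: power_add algebra_simps)
  also have "(\<Sum>n. (1/8::real) ^ n) = 8/7" by (subst suminf_geometric) auto
  finally show ?thesis by simp
qed

text \<open>A gliding hump: the coefficients \<open>\<plusminus>8\<^sup>-\<^sup>k/4\<close> of the series \<open>s = \<Sum>\<^sub>k c\<^sub>k W\<^sub>k\<close> are
  chosen one at a time, the sign making the new term reinforce the inner product with \<open>w\<^sub>k\<close>
  built up so far, while the tail after step \<open>k\<close> is too small to undo that.\<close>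

lemma L2_0_gliding_hump_series:
  assumes W: "\<And>k. W k \<in> L2_0 M" "\<And>k. L2_norm M (W k) = 1"
    and w: "\<And>k. w k \<in> L2 M" "\<And>k. 0 \<le> L2_inner M (W k) (w k)"
  shows "\<exists>s\<in>L2_0 M. \<forall>k. (1/8) ^ k / 4 * L2_inner M (W k) (w k) - (2/7) * (1/8) ^ Suc k * L2_norm M (w k)
    \<le> \<bar>L2_inner M s (w k)\<bar>"
proof -
  define r where "r k = (1/8::real) ^ k" for k :: nat
  define X where "X = rec_nat (\<lambda>x. 0::real)
    (\<lambda>k Xk. (\<lambda>x. Xk x + ((if 0 \<le> L2_inner M Xk (w k) then 1 else -1) * (r k / 4)) * W k x))"
  define c where "c k = (if 0 \<le> L2_inner M (X k) (w k) then 1 else -1) * (r k / 4)" for k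
  define d where "d k = (\<lambda>x. c k * W k x)" for k
  have XS: "X (Suc k) = (\<lambda>x. X k x + d k x)" for k unfolding X_def d_def c_def by simp
  have Xsum: "X k = (\<lambda>x. \<Sum>n<k. d n x)" for k
    by (induction k) (simp add: X_def, simp add: XS)
  have dL: "d k \<in> L2_0 M" for k unfolding d_def by (rule L2_0_scale[OF W(1)])
  have XL: "X k \<in> L2_0 M" for k unfolding Xsum by (rule L2_0_sum[OF dL])
  have nd: "L2_norm M (d k) = r k / 4" for k
    unfolding d_def L2_norm_scale[OF L2_0_imp_L2[OF W(1)]] W(2) c_def by (simp add: r_def)
  have sm: "summable (\<lambda>n. L2_norm M (d n))" unfolding nd r_def
    by (intro summable_divide summable_geometric) simp
  obtain s where s: "s \<in> L2_0 M"
    and "\<forall>K. L2_norm M (\<lambda>x. s x - (\<Sum>n<K. d n x)) \<le> (\<Sum>n. L2_norm M (d (n + K)))"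
    using L2_0_series_converges[OF dL sm] by blast
  then have tail: "L2_norm M (\<lambda>x. s x - X K x) \<le> (2/7) * r K" for K
    unfolding Xsum nd r_def suminf_power_eighth_tail by simp
  have "r k / 4 * L2_inner M (W k) (w k) - (2/7) * r (Suc k) * L2_norm M (w k) \<le> \<bar>L2_inner M s (w k)\<bar>" for k
  proof -
    define a where "a = L2_inner M (X k) (w k)"
    have split: "L2_inner M s (w k) = (a + c k * L2_inner M (W k) (w k)) + L2_inner M (\<lambda>x. s x - X (Suc k) x) (w k)"
      using L2_inner_diff_left[of s M "X (Suc k)" "w k"] L2_inner_lincomb_left[of "X k" M "W k" "w k" 1 "c k"]
        L2_0_imp_L2[OF XL[of "Suc k"]]
      unfolding XS d_def a_def by (simp add: L2_0_imp_L2 s XL W w)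
    have "c k * L2_inner M (W k) (w k) = (if 0 \<le> a then 1 else -1) * (r k / 4 * L2_inner M (W k) (w k))"
      unfolding c_def a_def by simp
    then have "r k / 4 * L2_inner M (W k) (w k) \<le> \<bar>a + c k * L2_inner M (W k) (w k)\<bar>"
      by (simp only:) (rule abs_add_sign_mult_ge, use w(2) in \<open>simp add: r_def\<close>)
    moreover have "\<bar>L2_inner M (\<lambda>x. s x - X (Suc k) x) (w k)\<bar> \<le> (2/7) * r (Suc k) * L2_norm M (w k)"
    proof -
      have "\<bar>L2_inner M (\<lambda>x. s x - X (Suc k) x) (w k)\<bar> \<le> L2_norm M (\<lambda>x. s x - X (Suc k) x) * L2_norm M (w k)"
        using L2_0_diff[OF s XL] w by (intro L2_Cauchy_Schwarz) (auto simp: L2_0_imp_L2)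
      also have "\<dots> \<le> (2/7) * r (Suc k) * L2_norm M (w k)" using tail by (intro mult_right_mono) (auto simp: L2_norm_nonneg)
      finally show ?thesis .
    qed
    ultimately show ?thesis unfolding split by linarith
  qed
  then show ?thesis using s unfolding r_def by blast
qed

lemma L2_0_gliding_hump:
  assumes w: "\<And>k. w k \<in> L2_0 M" and big: "\<And>k. 8 ^ Suc k * real (Suc k) < L2_norm M (w k)"
  shows "\<exists>s\<in>L2_0 M. \<forall>k. real k < \<bar>L2_inner M s (w k)\<bar>"
proof -
  define N where "N k = L2_norm M (w k)" for k
  have N0: "0 < N k" for k unfolding N_def by (rule le_less_trans[OF _ big]) simp
  have wL: "w k \<in> L2 M" for k using w by (rule L2_0_imp_L2)
  define W where "W k = (\<lambda>x. (1 / N k) * w k x)" for k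
  have W: "W k \<in> L2_0 M" "L2_norm M (W k) = 1" for k
    unfolding W_def N_def using L2_0_normalize[OF w] N0 unfolding N_def by auto
  have ipW: "L2_inner M (W k) (w k) = N k" for k
    unfolding W_def using L2_inner_lincomb_left[OF wL[of k] wL[of k] wL[of k], of "1 / N k" 0] N0[of k]
    by (simp add: N_def L2_norm_power2[symmetric] power2_eq_square)
  have "\<exists>s\<in>L2_0 M. \<forall>k. (1/8) ^ k / 4 * L2_inner M (W k) (w k) - (2/7) * (1/8) ^ Suc k * L2_norm M (w k)
      \<le> \<bar>L2_inner M s (w k)\<bar>"
    using W wL ipW N0 by (intro L2_0_gliding_hump_series) (auto simp: less_imp_le)
  then obtain s where s: "s \<in> L2_0 M"
    and hump: "\<And>k. (1/8) ^ k / 4 * N k - (2/7) * (1/8) ^ Suc k * N k \<le> \<bar>L2_inner M s (w k)\<bar>"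
    unfolding ipW N_def[symmetric] by blast
  have "real k < \<bar>L2_inner M s (w k)\<bar>" for k
  proof -
    have "(1/8) ^ k / 8 * (8 ^ Suc k * real (Suc k)) < (1/8) ^ k / 8 * N k"
      using big[of k] unfolding N_def by (intro mult_strict_left_mono) auto
    moreover have "(1/8::real) ^ k / 8 * (8 ^ Suc k * real (Suc k)) = real k + 1"
      by (simp add: power_divide field_simps)
    moreover have "(1/8) ^ k / 8 * N k \<le> (1/8) ^ k / 4 * N k - (2/7) * (1/8) ^ Suc k * N k"
      using N0[of k] by (simp add: field_simps)
    ultimately show ?thesis using hump[of k] by linarith
  qed
  then show ?thesis using s by blast
qed

lemma Hellinger_Toeplitz:
  assumes S: "L2_0_linear M S" "L2_0_symmetric M S"
    and null: "\<And>g. g \<in> L2_0 M \<Longrightarrow> (AE x in M. g x = 0) \<Longrightarrow> (AE x in M. S g x = 0)"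
  shows "\<exists>C. \<forall>g\<in>L2_0 M. L2_norm M (S g) \<le> C * L2_norm M g"
proof (rule ccontr)
  assume unbounded: "\<not> ?thesis"
  have "\<exists>v. v \<in> L2_0 M \<and> L2_norm M v = 1 \<and> R < L2_norm M (S v)" for R
  proof -
    from unbounded obtain g where g: "g \<in> L2_0 M" and gR: "max R 0 * L2_norm M g < L2_norm M (S g)"
      by (meson not_le)
    have "L2_norm M g \<noteq> 0"
    proof
      assume "L2_norm M g = 0"
      then have "AE x in M. S g x = 0" using null[OF g] L2_norm_eq_0_iff[of g M] g by (simp add: L2_0_imp_L2)
      then have "L2_norm M (S g) = 0" using L2_norm_eq_0_iff[of "S g" M] L2_0_linear_closed[OF S(1) g] by (simp add: L2_0_imp_L2)
      with gR \<open>L2_norm M g = 0\<close> show False by simp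
    qed
    then have gp: "0 < L2_norm M g" using L2_norm_nonneg[of M g] by linarith
    have "R * L2_norm M g \<le> max R 0 * L2_norm M g" by (intro mult_right_mono) (auto simp: L2_norm_nonneg)
    then have "R * L2_norm M g < L2_norm M (S g)" using gR by linarith
    then have "R < L2_norm M (S (\<lambda>x. (1 / L2_norm M g) * g x))"
      unfolding L2_norm_linear_scale[OF S(1) g] using gp by (simp add: field_simps)
    then show ?thesis using L2_0_normalize[OF g gp] by blast
  qed
  then have "\<forall>k. \<exists>v. v \<in> L2_0 M \<and> L2_norm M v = 1 \<and> 8 ^ Suc k * real (Suc k) < L2_norm M (S v)"
    by blast
  from choice[OF this] obtain V
    where V: "\<And>k. V k \<in> L2_0 M \<and> L2_norm M (V k) = 1 \<and> 8 ^ Suc k * real (Suc k) < L2_norm M (S (V k))"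
    by blast
  obtain s where s: "s \<in> L2_0 M" and hump: "\<And>k. real k < \<bar>L2_inner M s (S (V k))\<bar>"
    using L2_0_gliding_hump[of "\<lambda>k. S (V k)"] V L2_0_linear_closed[OF S(1)] by blast
  obtain k :: nat where k: "L2_norm M (S s) < real k" using reals_Archimedean2 by blast
  have "\<bar>L2_inner M s (S (V k))\<bar> = \<bar>L2_inner M (S s) (V k)\<bar>" using L2_0_symmetricD[OF S(2) s] V by simp
  also have "\<dots> \<le> L2_norm M (S s) * L2_norm M (V k)"
    using L2_0_linear_closed[OF S(1) s] V[of k] by (intro L2_Cauchy_Schwarz) (auto simp: L2_0_imp_L2)
  finally show False using hump[of k] k V[of k] by simp
qed

section \<open>Bounds on the quadratic form from the spectrum\<close>

lemma L2_0_bijective_AE_eq: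
  assumes D: "L2_0_linear M D" "L2_0_bijective M D"
    and f: "f \<in> L2_0 M" and h: "h \<in> L2_0 M" and e: "AE x in M. D f x = D h x"
  shows "AE x in M. f x = h x"
proof -
  have "AE x in M. D (\<lambda>x. 1 * f x + (-1) * h x) x = 1 * D f x + (-1) * D h x"
    by (rule L2_0_linear_lincomb_AE[OF D(1) f h])
  with e have "AE x in M. D (\<lambda>x. 1 * f x + (-1) * h x) x = 0" by eventually_elim simp
  with D(2) L2_0_lincomb[OF f h] have "AE x in M. 1 * f x + (-1) * h x = 0"
    unfolding L2_0_bijective_def by blast
  then show ?thesis by eventually_elim simp
qed

lemma L2_0_bijective_inverse:
  assumes D: "L2_0_linear M D" "L2_0_bijective M D"
  obtains S where "L2_0_linear M S"
    and "\<And>g. g \<in> L2_0 M \<Longrightarrow> AE x in M. D (S g) x = g x"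
    and "\<And>f. f \<in> L2_0 M \<Longrightarrow> AE x in M. S (D f) x = f x"
    and "\<And>g. g \<in> L2_0 M \<Longrightarrow> (AE x in M. g x = 0) \<Longrightarrow> AE x in M. S g x = 0"
proof -
  note inj = L2_0_bijective_AE_eq[OF D]
  have "\<forall>g\<in>L2_0 M. \<exists>f. f \<in> L2_0 M \<and> (AE x in M. D f x = g x)"
    using D(2) unfolding L2_0_bijective_def Bex_def by (rule conjunct2)
  from bchoice[OF this] obtain S where "\<forall>g\<in>L2_0 M. S g \<in> L2_0 M \<and> (AE x in M. D (S g) x = g x)" ..
  then have SL: "\<And>g. g \<in> L2_0 M \<Longrightarrow> S g \<in> L2_0 M"
    and DS: "\<And>g. g \<in> L2_0 M \<Longrightarrow> AE x in M. D (S g) x = g x" by auto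
  show ?thesis
  proof
    show "L2_0_linear M S" unfolding L2_0_linear_def
    proof (intro conjI ballI allI)
      fix f assume "f \<in> L2_0 M"
      then show "S f \<in> L2_0 M" by (rule SL)
    next
      fix f g a b assume f: "f \<in> L2_0 M" and g: "g \<in> L2_0 M"
      have fg: "(\<lambda>x. a * f x + b * g x) \<in> L2_0 M" by (rule L2_0_lincomb[OF f g])
      show "AE x in M. S (\<lambda>x. a * f x + b * g x) x = a * S f x + b * S g x"
      proof (rule inj[OF SL[OF fg] L2_0_lincomb[OF SL[OF f] SL[OF g]]])
        have "AE x in M. D (\<lambda>x. a * S f x + b * S g x) x = a * D (S f) x + b * D (S g) x"
          by (rule L2_0_linear_lincomb_AE[OF D(1) SL[OF f] SL[OF g]])
        with DS[OF fg] DS[OF f] DS[OF g]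
        show "AE x in M. D (S (\<lambda>x. a * f x + b * g x)) x = D (\<lambda>x. a * S f x + b * S g x) x"
          by eventually_elim simp
      qed
    qed
    show "AE x in M. D (S g) x = g x" if "g \<in> L2_0 M" for g using DS[OF that] .
    show "AE x in M. S (D f) x = f x" if f: "f \<in> L2_0 M" for f
      using inj[OF SL[OF L2_0_linear_closed[OF D(1) f]] f DS[OF L2_0_linear_closed[OF D(1) f]]] .
    show "AE x in M. S g x = 0" if g: "g \<in> L2_0 M" and "AE x in M. g x = 0" for g
    proof -
      from DS[OF g] \<open>AE x in M. g x = 0\<close> L2_0_linear_zero_AE[OF D(1)]
      have "AE x in M. D (S g) x = D (\<lambda>x. 0) x" by eventually_elim simp
      then show ?thesis using inj[OF SL[OF g] L2_0_zero] by simp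
    qed
  qed
qed

text \<open>The inverse of a bijective symmetric operator is symmetric and everywhere defined,
  hence bounded by the Hellinger--Toeplitz theorem.\<close>

lemma L2_0_bijective_bounded_below:
  assumes D: "L2_0_linear M D" "L2_0_symmetric M D" "L2_0_bijective M D"
  shows "\<exists>C. \<forall>f\<in>L2_0 M. L2_norm M f \<le> C * L2_norm M (D f)"
proof -
  obtain S where S: "L2_0_linear M S"
    and DS: "\<And>g. g \<in> L2_0 M \<Longrightarrow> AE x in M. D (S g) x = g x"
    and SD: "\<And>f. f \<in> L2_0 M \<Longrightarrow> AE x in M. S (D f) x = f x"
    and null: "\<And>g. g \<in> L2_0 M \<Longrightarrow> (AE x in M. g x = 0) \<Longrightarrow> AE x in M. S g x = 0"
    using L2_0_bijective_inverse[OF D(1,3)] by blast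
  have "L2_0_symmetric M S" unfolding L2_0_symmetric_def
  proof (intro ballI)
    fix f g assume f: "f \<in> L2_0 M" and g: "g \<in> L2_0 M"
    have Sf: "S f \<in> L2_0 M" and Sg: "S g \<in> L2_0 M" using L2_0_linear_closed[OF S] f g by auto
    have "L2_inner M (S f) g = L2_inner M (S f) (D (S g))"
      using DS[OF g] Sf g L2_0_linear_closed[OF D(1) Sg] by (intro L2_inner_cong_AE) (auto simp: L2_0_measurable)
    also have "\<dots> = L2_inner M (D (S f)) (S g)" using L2_0_symmetricD[OF D(2) Sf Sg] by simp
    also have "\<dots> = L2_inner M f (S g)"
      using DS[OF f] f Sg L2_0_linear_closed[OF D(1) Sf] by (intro L2_inner_cong_AE) (auto simp: L2_0_measurable)
    finally show "L2_inner M (S f) g = L2_inner M f (S g)" .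
  qed
  then obtain C where C: "\<And>g. g \<in> L2_0 M \<Longrightarrow> L2_norm M (S g) \<le> C * L2_norm M g"
    using Hellinger_Toeplitz[OF S _ null] by blast
  have "L2_norm M f \<le> C * L2_norm M (D f)" if f: "f \<in> L2_0 M" for f
  proof -
    have Df: "D f \<in> L2_0 M" using L2_0_linear_closed[OF D(1) f] .
    have "L2_norm M f = L2_norm M (S (D f))"
      using SD[OF f] f L2_0_linear_closed[OF S Df] by (intro L2_norm_cong_AE) (auto simp: L2_0_measurable)
    also have "\<dots> \<le> C * L2_norm M (D f)" by (rule C[OF Df])
    finally show ?thesis .
  qed
  then show ?thesis by blast
qed

lemma L2_norm_power2_le_nonneg_quadratic_form:
  assumes A: "L2_0_linear M A" "L2_0_bounded M A C" "L2_0_symmetric M A"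
    and pos: "\<And>u. u \<in> L2_0 M \<Longrightarrow> 0 \<le> L2_inner M (A u) u" and f: "f \<in> L2_0 M"
  shows "(L2_norm M (A f))\<^sup>2 \<le> \<bar>C\<bar> * L2_inner M (A f) f"
proof -
  define n where "n = (L2_norm M (A f))\<^sup>2"
  have Af: "A f \<in> L2_0 M" using L2_0_linear_closed[OF A(1) f] .
  have "n\<^sup>2 = (L2_inner M (A f) (A f))\<^sup>2" unfolding n_def by (simp add: L2_norm_power2)
  also have "\<dots> \<le> L2_inner M (A f) f * L2_inner M (A (A f)) (A f)"
    by (rule Cauchy_Schwarz_nonneg_operator[OF A(1,3) pos f Af])
  also have "\<dots> \<le> L2_inner M (A f) f * (\<bar>C\<bar> * n)"
    using abs_quadratic_form_le[OF A(1,2) Af] pos[OF f] unfolding n_def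
    by (intro mult_left_mono) auto
  finally have "n * n \<le> (\<bar>C\<bar> * L2_inner M (A f) f) * n" by (simp add: power2_eq_square algebra_simps)
  moreover have "0 \<le> \<bar>C\<bar> * L2_inner M (A f) f" using pos[OF f] by simp
  moreover have "0 \<le> n" unfolding n_def by simp
  ultimately have "n \<le> \<bar>C\<bar> * L2_inner M (A f) f"
    by (cases "n = 0") (auto intro: mult_right_le_imp_le)
  then show ?thesis unfolding n_def .
qed

text \<open>Cauchy--Schwarz for the nonnegative form of \<open>-D\<close> gives \<open>\<parallel>D f\<parallel>\<^sup>2 \<le> C \<bar>\<langle>D f, f\<rangle>\<bar>\<close>,
  so \<open>D\<close> is not bounded below.\<close>

lemma not_L2_0_bijective_of_nonpos_quadratic_form:
  assumes D: "L2_0_linear M D" "L2_0_bounded M D C" "L2_0_symmetric M D"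
    and nonpos: "\<And>f. f \<in> L2_0 M \<Longrightarrow> L2_inner M (D f) f \<le> 0"
    and approx: "\<And>e. 0 < e \<Longrightarrow> \<exists>f\<in>L2_0 M. L2_norm M f = 1 \<and> - e \<le> L2_inner M (D f) f"
  shows "\<not> L2_0_bijective M D"
proof
  assume "L2_0_bijective M D"
  then obtain C' where C': "\<And>f. f \<in> L2_0 M \<Longrightarrow> L2_norm M f \<le> C' * L2_norm M (D f)"
    using L2_0_bijective_bounded_below[OF D(1,3)] by blast
  define t where "t = C'\<^sup>2 * \<bar>C\<bar>"
  define e where "e = 1 / (t + 1)"
  have t: "0 \<le> t" unfolding t_def by simp
  then have "0 < e" unfolding e_def by simp
  then obtain f where f: "f \<in> L2_0 M" "L2_norm M f = 1" "- e \<le> L2_inner M (D f) f" using approx by blast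
  have Df: "D f \<in> L2 M" using L2_0_linear_closed[OF D(1) f(1)] by (rule L2_0_imp_L2)
  have "(L2_norm M (\<lambda>x. - D f x))\<^sup>2 \<le> \<bar>C\<bar> * L2_inner M (\<lambda>x. - D f x) f"
  proof (rule L2_norm_power2_le_nonneg_quadratic_form)
    show "L2_0_linear M (\<lambda>f x. - D f x)" "L2_0_bounded M (\<lambda>f x. - D f x) C" "L2_0_symmetric M (\<lambda>f x. - D f x)"
      using D by (auto intro: L2_0_linear_uminus L2_0_bounded_uminus L2_0_symmetric_uminus)
    show "0 \<le> L2_inner M (\<lambda>x. - D u x) u" if "u \<in> L2_0 M" for u
      using nonpos[OF that] quadratic_form_uminus[OF D(1) that] by simp
  qed (rule f(1))
  also have "\<dots> \<le> \<bar>C\<bar> * e"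
    using f(3) quadratic_form_uminus[OF D(1) f(1)] by (intro mult_left_mono) auto
  finally have small: "(L2_norm M (D f))\<^sup>2 \<le> \<bar>C\<bar> * e" using L2_norm_uminus[OF Df] by simp
  have "1 \<le> C' * L2_norm M (D f)" using C'[OF f(1)] f(2) by simp
  then have "1 \<le> (C' * L2_norm M (D f))\<^sup>2" by (simp add: one_le_power)
  also have "\<dots> \<le> C'\<^sup>2 * (\<bar>C\<bar> * e)" unfolding power_mult_distrib using small by (intro mult_left_mono) auto
  also have "\<dots> = t / (t + 1)" unfolding t_def e_def by simp
  also have "\<dots> < 1" using t by simp
  finally show False by simp
qed

lemma quadratic_form_in_numerical_range:
  assumes "L2_0_linear M B" "f \<in> L2_0 M" "0 < L2_norm M f"
  shows "L2_inner M (B f) f / (L2_norm M f)\<^sup>2 \<in> numerical_range M B"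
proof -
  let ?u = "\<lambda>x. (1 / L2_norm M f) * f x"
  have "L2_inner M (B ?u) ?u = (1 / L2_norm M f)\<^sup>2 * L2_inner M (B f) f"
    by (rule quadratic_form_scale[OF assms(1,2)])
  also have "\<dots> = L2_inner M (B f) f / (L2_norm M f)\<^sup>2" by (simp add: power_divide)
  finally have "L2_inner M (B f) f / (L2_norm M f)\<^sup>2 = L2_inner M (B ?u) ?u" ..
  then show ?thesis unfolding numerical_range_def
    using L2_0_normalize[OF assms(2,3)] by (intro CollectI exI[of _ ?u]) simp
qed

lemma quadratic_form_le_Sup_numerical_range:
  assumes B: "L2_0_linear M B" "L2_0_bounded M B C" and f: "f \<in> L2_0 M"
  shows "L2_inner M (B f) f \<le> Sup (numerical_range M B) * (L2_norm M f)\<^sup>2"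
proof (cases "L2_norm M f = 0")
  case True
  then show ?thesis using abs_quadratic_form_le[OF B f] by simp
next
  case False
  then have pos: "0 < L2_norm M f" using L2_norm_nonneg[of M f] by simp
  have "bdd_above (numerical_range M B)"
  proof (rule bdd_aboveI)
    fix y assume "y \<in> numerical_range M B"
    then obtain g where "g \<in> L2_0 M" "L2_norm M g = 1" "y = L2_inner M (B g) g"
      unfolding numerical_range_def by blast
    then show "y \<le> \<bar>C\<bar>" using abs_quadratic_form_le[OF B] by fastforce
  qed
  then have "L2_inner M (B f) f / (L2_norm M f)\<^sup>2 \<le> Sup (numerical_range M B)"
    by (rule cSup_upper[OF quadratic_form_in_numerical_range[OF B(1) f pos]])
  then show ?thesis using pos by (simp add: divide_le_eq)
qed

lemma Sup_numerical_range_in_L2_0_spectrum: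
  assumes B: "L2_0_linear M B" "L2_0_bounded M B C" "L2_0_symmetric M B"
    and ne: "numerical_range M B \<noteq> {}"
  shows "Sup (numerical_range M B) \<in> L2_0_spectrum M B"
proof -
  define s where "s = Sup (numerical_range M B)"
  have "\<not> L2_0_bijective M (\<lambda>f x. B f x - s * f x)"
  proof (rule not_L2_0_bijective_of_nonpos_quadratic_form)
    show "L2_0_linear M (\<lambda>f x. B f x - s * f x)" "L2_0_bounded M (\<lambda>f x. B f x - s * f x) (C + \<bar>s\<bar>)"
      "L2_0_symmetric M (\<lambda>f x. B f x - s * f x)"
      using B by (auto intro: L2_0_linear_shift L2_0_bounded_shift L2_0_symmetric_shift)
    show "L2_inner M (\<lambda>x. B f x - s * f x) f \<le> 0" if "f \<in> L2_0 M" for f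
      using quadratic_form_le_Sup_numerical_range[OF B(1,2) that] quadratic_form_shift[OF B(1) that]
      unfolding s_def by simp
    show "\<exists>f\<in>L2_0 M. L2_norm M f = 1 \<and> - e \<le> L2_inner M (\<lambda>x. B f x - s * f x) f" if "0 < e" for e
    proof -
      obtain y where y: "y \<in> numerical_range M B" "s - e < y"
        using less_cSupD[OF ne, of "s - e"] \<open>0 < e\<close> unfolding s_def by auto
      then obtain g where g: "g \<in> L2_0 M" "L2_norm M g = 1" "y = L2_inner M (B g) g"
        unfolding numerical_range_def by blast
      then show ?thesis using quadratic_form_shift[OF B(1) g(1), of s] y(2) by (intro bexI[of _ g]) auto
    qed
  qed
  then show ?thesis unfolding s_def L2_0_spectrum_def by simp
qed

lemma quadratic_form_le_of_L2_0_spectrum_le: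
  assumes B: "L2_0_linear M B" "L2_0_bounded M B C" "L2_0_symmetric M B"
    and r: "\<And>l. l \<in> L2_0_spectrum M B \<Longrightarrow> l \<le> r" and f: "f \<in> L2_0 M"
  shows "L2_inner M (B f) f \<le> r * (L2_norm M f)\<^sup>2"
proof (cases "L2_norm M f = 0")
  case True
  then show ?thesis using abs_quadratic_form_le[OF B(1,2) f] by simp
next
  case False
  then have "0 < L2_norm M f" using L2_norm_nonneg[of M f] by simp
  then have "numerical_range M B \<noteq> {}" using quadratic_form_in_numerical_range[OF B(1) f] by blast
  then have "Sup (numerical_range M B) \<le> r" by (intro r Sup_numerical_range_in_L2_0_spectrum[OF B])
  then have "Sup (numerical_range M B) * (L2_norm M f)\<^sup>2 \<le> r * (L2_norm M f)\<^sup>2"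
    by (intro mult_right_mono) auto
  then show ?thesis using quadratic_form_le_Sup_numerical_range[OF B(1,2) f] by simp
qed

lemma quadratic_form_ge_of_L2_0_spectrum_ge:
  assumes B: "L2_0_linear M B" "L2_0_bounded M B C" "L2_0_symmetric M B"
    and r: "\<And>l. l \<in> L2_0_spectrum M B \<Longrightarrow> r \<le> l" and f: "f \<in> L2_0 M"
  shows "r * (L2_norm M f)\<^sup>2 \<le> L2_inner M (B f) f"
proof -
  have "L2_inner M (\<lambda>x. - B f x) f \<le> - r * (L2_norm M f)\<^sup>2"
  proof (rule quadratic_form_le_of_L2_0_spectrum_le[OF _ _ _ _ f])
    show "L2_0_linear M (\<lambda>f x. - B f x)" "L2_0_bounded M (\<lambda>f x. - B f x) C" "L2_0_symmetric M (\<lambda>f x. - B f x)"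
      using B by (auto intro: L2_0_linear_uminus L2_0_bounded_uminus L2_0_symmetric_uminus)
    show "l \<le> - r" if "l \<in> L2_0_spectrum M (\<lambda>f x. - B f x)" for l
      using r[of "- l"] that by (simp add: L2_0_spectrum_uminus)
  qed
  then show ?thesis using quadratic_form_uminus[OF B(1) f] by simp
qed

end

section \<open>Reversible Markov kernels\<close>

definition pos_part :: "('a \<Rightarrow> real) \<Rightarrow> 'a \<Rightarrow> real" where "pos_part f = (\<lambda>x. (1/2) * f x + (1/2) * \<bar>f x\<bar>)"
definition neg_part :: "('a \<Rightarrow> real) \<Rightarrow> 'a \<Rightarrow> real" where "neg_part f = (\<lambda>x. (-1/2) * f x + (1/2) * \<bar>f x\<bar>)"

lemma L2_pos_neg_part:
  assumes f: "f \<in> L2 M"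
  shows "pos_part f \<in> L2 M" "neg_part f \<in> L2 M" "\<And>y. 0 \<le> pos_part f y" "\<And>y. 0 \<le> neg_part f y"
    "f = (\<lambda>x. 1 * pos_part f x + (-1) * neg_part f x)"
proof -
  show "pos_part f \<in> L2 M" unfolding pos_part_def by (rule L2_lincomb[OF f L2_abs(1)[OF f]])
  show "neg_part f \<in> L2 M" unfolding neg_part_def by (rule L2_lincomb[OF f L2_abs(1)[OF f]])
  show "\<And>y. 0 \<le> pos_part f y" "\<And>y. 0 \<le> neg_part f y" unfolding pos_part_def neg_part_def by (auto simp: abs_if)
  show "f = (\<lambda>x. 1 * pos_part f x + (-1) * neg_part f x)" unfolding pos_part_def neg_part_def by (auto simp: fun_eq_iff)
qed

locale reversible_kernel = prob_space M for M :: "'a measure" +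
  fixes K :: "'a \<Rightarrow> 'a measure"
  assumes kern: "K \<in> M \<rightarrow>\<^sub>M prob_algebra M"
    and rev: "reversible M K"
begin

lemma K_subprob[measurable]: "K \<in> M \<rightarrow>\<^sub>M subprob_algebra M"
  using kern by (rule measurable_prob_algebraD)

lemma K_prob: "x \<in> space M \<Longrightarrow> prob_space (K x) \<and> sets (K x) = sets M"
  using measurable_space[OF kern] by (simp add: space_prob_algebra)

lemma space_K: "x \<in> space M \<Longrightarrow> space (K x) = space M"
  using K_prob sets_eq_imp_space_eq by blast

lemma measurable_K: "x \<in> space M \<Longrightarrow> f \<in> borel_measurable M \<Longrightarrow> f \<in> borel_measurable (K x)"
  using K_prob measurable_cong_sets by blast

lemma measurable_nn_integral_K: "v \<in> borel_measurable M \<Longrightarrow> (\<lambda>x. \<integral>\<^sup>+y. v y \<partial>K x) \<in> borel_measurable M"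
  by (rule measurable_compose[OF K_subprob nn_integral_measurable_subprob_algebra])

lemma measurable_emeasure_K: "B \<in> sets M \<Longrightarrow> (\<lambda>x. emeasure (K x) B) \<in> borel_measurable M"
  by (rule measurable_emeasure_kernel[OF K_subprob])

lemma nn_integral_emeasure_K_stationary:
  assumes B: "B \<in> sets M"
  shows "(\<integral>\<^sup>+x. emeasure (K x) B \<partial>M) = emeasure M B"
proof -
  have "(\<integral>\<^sup>+x. indicator (space M) x * emeasure (K x) B \<partial>M) = (\<integral>\<^sup>+x. indicator B x * emeasure (K x) (space M) \<partial>M)"
    using rev B unfolding reversible_def by auto
  moreover have "(\<integral>\<^sup>+x. indicator (space M) x * emeasure (K x) B \<partial>M) = (\<integral>\<^sup>+x. emeasure (K x) B \<partial>M)"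
    by (intro nn_integral_cong) simp
  moreover have "(\<integral>\<^sup>+x. indicator B x * emeasure (K x) (space M) \<partial>M) = (\<integral>\<^sup>+x. indicator B x \<partial>M)"
  proof (intro nn_integral_cong)
    fix x assume x: "x \<in> space M"
    then have "emeasure (K x) (space M) = 1" using K_prob[OF x] space_K[OF x] prob_space.emeasure_space_1 by metis
    then show "indicator B x * emeasure (K x) (space M) = indicator B x" by simp
  qed
  ultimately show ?thesis using B by simp
qed

lemma bind_K_stationary: "M \<bind> K = M"
proof (rule measure_eqI)
  show sb: "sets (M \<bind> K) = sets M" using K_prob not_empty by (intro sets_bind) auto
  fix B assume "B \<in> sets (M \<bind> K)"
  then have B: "B \<in> sets M" using sb by simp
  show "emeasure (M \<bind> K) B = emeasure M B"
    using emeasure_bind[OF not_empty K_subprob B] nn_integral_emeasure_K_stationary[OF B] by simp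
qed

lemma nn_integral_K_stationary:
  assumes h: "h \<in> borel_measurable M"
  shows "(\<integral>\<^sup>+x. (\<integral>\<^sup>+y. h y \<partial>K x) \<partial>M) = (\<integral>\<^sup>+x. h x \<partial>M)"
  using nn_integral_bind[OF h K_subprob] bind_K_stationary by simp

definition kernel_pairing :: "('a \<Rightarrow> ennreal) \<Rightarrow> ('a \<Rightarrow> ennreal) \<Rightarrow> ennreal" where
  "kernel_pairing u v = (\<integral>\<^sup>+x. u x * (\<integral>\<^sup>+y. v y \<partial>K x) \<partial>M)"

text \<open>Reversibility is the symmetry of \<^term>\<open>kernel_pairing\<close> on indicators; it extends to all
  nonnegative measurable functions by monotone approximation, and through positive and negative
  parts to the symmetry of \<^term>\<open>kop K\<close> on \<open>L\<^sup>2\<close>.\<close>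

lemma kernel_pairing_indicator_commute:
  assumes A: "A \<in> sets M" and B: "B \<in> sets M"
  shows "kernel_pairing (indicator A) (indicator B) = kernel_pairing (indicator B) (indicator A)"
proof -
  have "kernel_pairing (indicator A) (indicator B) = (\<integral>\<^sup>+x. indicator A x * emeasure (K x) B \<partial>M)"
    unfolding kernel_pairing_def using B K_prob by (intro nn_integral_cong) auto
  also have "\<dots> = (\<integral>\<^sup>+x. indicator B x * emeasure (K x) A \<partial>M)" using rev A B unfolding reversible_def by auto
  also have "\<dots> = kernel_pairing (indicator B) (indicator A)"
    unfolding kernel_pairing_def using A K_prob by (intro nn_integral_cong) auto
  finally show ?thesis .
qed

lemma kernel_pairing_cmult_left:
  assumes "u \<in> borel_measurable M" "v \<in> borel_measurable M"
  shows "kernel_pairing (\<lambda>x. c * u x) v = c * kernel_pairing u v"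
  unfolding kernel_pairing_def using assms measurable_nn_integral_K[OF assms(2)]
  by (subst nn_integral_cmult[symmetric]) (auto simp: mult.assoc)

lemma kernel_pairing_cmult_right:
  assumes "u \<in> borel_measurable M" "v \<in> borel_measurable M"
  shows "kernel_pairing v (\<lambda>x. c * u x) = c * kernel_pairing v u"
proof -
  have "kernel_pairing v (\<lambda>x. c * u x) = (\<integral>\<^sup>+x. c * (v x * (\<integral>\<^sup>+y. u y \<partial>K x)) \<partial>M)"
    unfolding kernel_pairing_def using assms measurable_K
    by (intro nn_integral_cong) (auto simp: nn_integral_cmult mult.left_commute)
  also have "\<dots> = c * kernel_pairing v u"
    unfolding kernel_pairing_def using assms measurable_nn_integral_K by (intro nn_integral_cmult) auto
  finally show ?thesis .
qed

lemma kernel_pairing_add_left: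
  assumes "u \<in> borel_measurable M" "w \<in> borel_measurable M" "v \<in> borel_measurable M"
  shows "kernel_pairing (\<lambda>x. u x + w x) v = kernel_pairing u v + kernel_pairing w v"
  unfolding kernel_pairing_def using assms measurable_nn_integral_K[OF assms(3)]
  by (subst nn_integral_add[symmetric]) (auto simp: distrib_right)

lemma kernel_pairing_add_right:
  assumes "u \<in> borel_measurable M" "w \<in> borel_measurable M" "v \<in> borel_measurable M"
  shows "kernel_pairing v (\<lambda>x. u x + w x) = kernel_pairing v u + kernel_pairing v w"
proof -
  have "kernel_pairing v (\<lambda>x. u x + w x) = (\<integral>\<^sup>+x. v x * (\<integral>\<^sup>+y. u y \<partial>K x) + v x * (\<integral>\<^sup>+y. w y \<partial>K x) \<partial>M)"
    unfolding kernel_pairing_def using assms measurable_K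
    by (intro nn_integral_cong) (auto simp: nn_integral_add distrib_left)
  also have "\<dots> = kernel_pairing v u + kernel_pairing v w"
    unfolding kernel_pairing_def using assms measurable_nn_integral_K by (intro nn_integral_add) auto
  finally show ?thesis .
qed

lemma kernel_pairing_SUP_left:
  assumes U: "incseq U" "\<And>i. U i \<in> borel_measurable M" and v: "v \<in> borel_measurable M"
  shows "kernel_pairing (SUP i. U i) v = (SUP i. kernel_pairing (U i) v)"
proof -
  have "kernel_pairing (SUP i. U i) v = (\<integral>\<^sup>+x. (SUP i. U i x * (\<integral>\<^sup>+y. v y \<partial>K x)) \<partial>M)"
    unfolding kernel_pairing_def SUP_apply by (simp add: SUP_mult_right_ennreal image_comp)
  also have "\<dots> = (SUP i. kernel_pairing (U i) v)" unfolding kernel_pairing_def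
  proof (rule nn_integral_monotone_convergence_SUP)
    show "incseq (\<lambda>i x. U i x * (\<integral>\<^sup>+y. v y \<partial>K x))"
      using U(1) unfolding incseq_def le_fun_def by (auto intro!: mult_right_mono)
    show "(\<lambda>x. U i x * (\<integral>\<^sup>+y. v y \<partial>K x)) \<in> borel_measurable M" for i
      using U(2) measurable_nn_integral_K[OF v] by measurable
  qed
  finally show ?thesis .
qed

lemma kernel_pairing_SUP_right:
  assumes U: "incseq U" "\<And>i. U i \<in> borel_measurable M" and v: "v \<in> borel_measurable M"
  shows "kernel_pairing v (SUP i. U i) = (SUP i. kernel_pairing v (U i))"
proof -
  have "kernel_pairing v (SUP i. U i) = (\<integral>\<^sup>+x. (SUP i. v x * (\<integral>\<^sup>+y. U i y \<partial>K x)) \<partial>M)"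
    unfolding kernel_pairing_def
  proof (intro nn_integral_cong)
    fix x assume x: "x \<in> space M"
    have "(\<integral>\<^sup>+y. (SUP i. U i) y \<partial>K x) = (SUP i. \<integral>\<^sup>+y. U i y \<partial>K x)"
      unfolding SUP_apply using U measurable_K[OF x] by (intro nn_integral_monotone_convergence_SUP) auto
    then show "v x * (\<integral>\<^sup>+y. (SUP i. U i) y \<partial>K x) = (SUP i. v x * (\<integral>\<^sup>+y. U i y \<partial>K x))"
      by (simp add: SUP_mult_left_ennreal image_comp)
  qed
  also have "\<dots> = (SUP i. kernel_pairing v (U i))" unfolding kernel_pairing_def
  proof (rule nn_integral_monotone_convergence_SUP)
    show "incseq (\<lambda>i x. v x * (\<integral>\<^sup>+y. U i y \<partial>K x))"
      using U unfolding incseq_def le_fun_def by (auto intro!: mult_left_mono nn_integral_mono)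
    show "(\<lambda>x. v x * (\<integral>\<^sup>+y. U i y \<partial>K x)) \<in> borel_measurable M" for i
      using U(2) v measurable_nn_integral_K[of "U i"] by auto
  qed
  finally show ?thesis .
qed

lemma kernel_pairing_commute_indicator:
  assumes v: "v \<in> borel_measurable M"
    and ind: "\<And>A. A \<in> sets M \<Longrightarrow> kernel_pairing (indicator A) v = kernel_pairing v (indicator A)"
    and u: "u \<in> borel_measurable M"
  shows "kernel_pairing u v = kernel_pairing v u"
  using u
proof (induct rule: borel_measurable_induct)
  case (cong f g)
  have "kernel_pairing f v = kernel_pairing g v"
    unfolding kernel_pairing_def using cong by (intro nn_integral_cong) auto
  moreover have "kernel_pairing v f = kernel_pairing v g" unfolding kernel_pairing_def using cong space_K
    by (intro nn_integral_cong arg_cong2[where f="(*)"] refl) auto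
  ultimately show ?case using cong by simp
next
  case (set A)
  then show ?case by (rule ind)
next
  case (mult u c)
  then show ?case using v by (simp add: kernel_pairing_cmult_left kernel_pairing_cmult_right)
next
  case (add u w)
  then show ?case using v by (simp add: kernel_pairing_add_left kernel_pairing_add_right add.commute)
next
  case (seq U)
  have "kernel_pairing (SUP i. U i) v = (SUP i. kernel_pairing (U i) v)"
    by (rule kernel_pairing_SUP_left[OF seq(4,1) v])
  moreover have "kernel_pairing v (SUP i. U i) = (SUP i. kernel_pairing v (U i))"
    by (rule kernel_pairing_SUP_right[OF seq(4,1) v])
  ultimately show ?case using seq(3) by (simp only:)
qed

lemma kernel_pairing_commute:
  assumes "u \<in> borel_measurable M" "v \<in> borel_measurable M"
  shows "kernel_pairing u v = kernel_pairing v u"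
proof -
  have s1: "kernel_pairing w (indicator B) = kernel_pairing (indicator B) w" if B: "B \<in> sets M" and w: "w \<in> borel_measurable M" for B w
  proof (rule kernel_pairing_commute_indicator)
    show "indicator B \<in> borel_measurable M" using B by simp
    show "kernel_pairing (indicator A) (indicator B) = kernel_pairing (indicator B) (indicator A)" if "A \<in> sets M" for A
      by (rule kernel_pairing_indicator_commute[OF that B])
  qed (rule w)
  show ?thesis
  proof (rule kernel_pairing_commute_indicator)
    show "kernel_pairing (indicator A) v = kernel_pairing v (indicator A)" if "A \<in> sets M" for A
      using s1[OF that assms(2)] by (rule sym)
  qed (use assms in auto)
qed

lemma kop_measurable: "f \<in> borel_measurable M \<Longrightarrow> kop K f \<in> borel_measurable M"
  unfolding kop_def by (rule measurable_compose[OF K_subprob integral_measurable_subprob_algebra])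

lemma AE_kernel_integrable:
  assumes f: "f \<in> L2 M"
  shows "AE x in M. integrable (K x) (\<lambda>y. (f y)\<^sup>2) \<and> integrable (K x) f"
proof -
  have fm: "f \<in> borel_measurable M" using f unfolding L2_def by auto
  have "(\<integral>\<^sup>+x. (\<integral>\<^sup>+y. ennreal ((f y)\<^sup>2) \<partial>K x) \<partial>M) = (\<integral>\<^sup>+x. ennreal ((f x)\<^sup>2) \<partial>M)"
    using fm by (intro nn_integral_K_stationary) auto
  also have "\<dots> = ennreal ((L2_norm M f)\<^sup>2)" by (rule nn_integral_power2_eq_L2_norm[OF f])
  finally have "(\<integral>\<^sup>+x. (\<integral>\<^sup>+y. ennreal ((f y)\<^sup>2) \<partial>K x) \<partial>M) \<noteq> \<infinity>" by simp
  then have "AE x in M. (\<integral>\<^sup>+y. ennreal ((f y)\<^sup>2) \<partial>K x) \<noteq> \<infinity>"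
    using fm by (intro nn_integral_PInf_AE measurable_nn_integral_K) auto
  with AE_space show ?thesis
  proof eventually_elim
    case (elim x)
    then have x: "x \<in> space M" and fin: "(\<integral>\<^sup>+y. ennreal ((f y)\<^sup>2) \<partial>K x) \<noteq> \<infinity>" by auto
    have fmx: "f \<in> borel_measurable (K x)" using measurable_K[OF x fm] .
    have i2: "integrable (K x) (\<lambda>y. (f y)\<^sup>2)"
      using fmx fin by (intro integrableI_bounded) (auto simp: top.not_eq_extremum)
    interpret Kx: prob_space "K x" using K_prob[OF x] by simp
    have "f \<in> L2 (K x)" using fmx i2 unfolding L2_def by auto
    then have "integrable (K x) f" by (rule Kx.L2_integrable)
    then show ?case using i2 by simp
  qed
qed

lemma kop_L2:
  assumes f: "f \<in> L2 M"
  shows "kop K f \<in> L2 M" "L2_norm M (kop K f) \<le> L2_norm M f"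
proof -
  have fm: "f \<in> borel_measurable M" using f unfolding L2_def by auto
  have km: "kop K f \<in> borel_measurable M" by (rule kop_measurable[OF fm])
  have "AE x in M. ennreal ((kop K f x)\<^sup>2) \<le> (\<integral>\<^sup>+y. ennreal ((f y)\<^sup>2) \<partial>K x)"
    using AE_kernel_integrable[OF f] AE_space
  proof eventually_elim
    case (elim x)
    interpret Kx: prob_space "K x" using K_prob[of x] elim by simp
    have "(kop K f x)\<^sup>2 \<le> (\<integral>y. (f y)\<^sup>2 \<partial>K x)"
      unfolding kop_def using elim Kx.variance_eq[of f] Kx.variance_positive[of f] by simp
    moreover have "(\<integral>\<^sup>+y. ennreal ((f y)\<^sup>2) \<partial>K x) = ennreal (\<integral>y. (f y)\<^sup>2 \<partial>K x)"
      using elim by (intro nn_integral_eq_integral) auto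
    ultimately show ?case by (simp add: ennreal_leI)
  qed
  then have "(\<integral>\<^sup>+x. ennreal ((kop K f x)\<^sup>2) \<partial>M) \<le> (\<integral>\<^sup>+x. (\<integral>\<^sup>+y. ennreal ((f y)\<^sup>2) \<partial>K x) \<partial>M)"
    by (rule nn_integral_mono_AE)
  also have "\<dots> = (\<integral>\<^sup>+x. ennreal ((f x)\<^sup>2) \<partial>M)" using fm by (intro nn_integral_K_stationary) auto
  also have "\<dots> = ennreal ((L2_norm M f)\<^sup>2)" by (rule nn_integral_power2_eq_L2_norm[OF f])
  finally have I: "(\<integral>\<^sup>+x. ennreal ((kop K f x)\<^sup>2) \<partial>M) \<le> ennreal ((L2_norm M f)\<^sup>2)" .
  show "kop K f \<in> L2 M" using L2_of_nn_integral_power2_le(1)[OF km I] by simp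
  show "L2_norm M (kop K f) \<le> L2_norm M f"
    using L2_of_nn_integral_power2_le(2)[OF km I] L2_norm_nonneg[of M f] by simp
qed

lemma kop_lincomb_AE:
  assumes f: "f \<in> L2 M" and g: "g \<in> L2 M"
  shows "AE x in M. kop K (\<lambda>y. a * f y + b * g y) x = a * kop K f x + b * kop K g x"
  using AE_kernel_integrable[OF f] AE_kernel_integrable[OF g]
proof eventually_elim
  case (elim x)
  then show ?case unfolding kop_def by simp
qed

lemma kop_nonneg: "(\<And>y. 0 \<le> p y) \<Longrightarrow> 0 \<le> kop K p x"
  unfolding kop_def by (intro Bochner_Integration.integral_nonneg) auto

lemma kernel_pairing_eq_L2_inner:
  assumes p: "p \<in> L2 M" and q: "q \<in> L2 M" and p0: "\<And>y. 0 \<le> p y" and q0: "\<And>y. 0 \<le> q y"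
  shows "kernel_pairing (\<lambda>x. ennreal (q x)) (\<lambda>y. ennreal (p y)) = ennreal (L2_inner M (kop K p) q)"
proof -
  have "kernel_pairing (\<lambda>x. ennreal (q x)) (\<lambda>y. ennreal (p y)) = (\<integral>\<^sup>+x. ennreal (kop K p x * q x) \<partial>M)"
    unfolding kernel_pairing_def
  proof (rule nn_integral_cong_AE)
    show "AE x in M. ennreal (q x) * (\<integral>\<^sup>+y. ennreal (p y) \<partial>K x) = ennreal (kop K p x * q x)"
      using AE_kernel_integrable[OF p] AE_space
    proof eventually_elim
      case (elim x)
      have "(\<integral>\<^sup>+y. ennreal (p y) \<partial>K x) = ennreal (kop K p x)"
        unfolding kop_def using elim p0 by (intro nn_integral_eq_integral) auto
      then show ?case using q0[of x] kop_nonneg[of p x, OF p0] by (simp add: ennreal_mult mult.commute)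
    qed
  qed
  also have "\<dots> = ennreal (L2_inner M (kop K p) q)" unfolding L2_inner_def
    using L2_integrable_mult[OF kop_L2(1)[OF p] q] q0 kop_nonneg[OF p0]
    by (intro nn_integral_eq_integral) auto
  finally show ?thesis .
qed

lemma L2_inner_kop_commute_nonneg:
  assumes p: "p \<in> L2 M" and q: "q \<in> L2 M" and p0: "\<And>y. 0 \<le> p y" and q0: "\<And>y. 0 \<le> q y"
  shows "L2_inner M (kop K p) q = L2_inner M (kop K q) p"
proof -
  have pm: "p \<in> borel_measurable M" and qm: "q \<in> borel_measurable M" using p q unfolding L2_def by auto
  have "ennreal (L2_inner M (kop K p) q) = ennreal (L2_inner M (kop K q) p)"
    using kernel_pairing_eq_L2_inner[OF p q p0 q0] kernel_pairing_eq_L2_inner[OF q p q0 p0] kernel_pairing_commute[of "\<lambda>x. ennreal (q x)" "\<lambda>x. ennreal (p x)"] pm qm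
    by simp
  moreover have "0 \<le> L2_inner M (kop K p) q" "0 \<le> L2_inner M (kop K q) p" unfolding L2_inner_def
    using kop_nonneg[OF p0] kop_nonneg[OF q0] p0 q0 by (auto intro!: Bochner_Integration.integral_nonneg)
  ultimately show ?thesis by simp
qed

lemma L2_inner_kop_pos_neg:
  assumes f: "f \<in> L2 M" and g: "g \<in> L2 M"
  shows "L2_inner M (kop K f) g = L2_inner M (kop K (pos_part f)) (pos_part g) - L2_inner M (kop K (pos_part f)) (neg_part g)
     - L2_inner M (kop K (neg_part f)) (pos_part g) + L2_inner M (kop K (neg_part f)) (neg_part g)"
proof -
  note F = L2_pos_neg_part[OF f] and G = L2_pos_neg_part[OF g]
  have KF: "kop K (pos_part f) \<in> L2 M" "kop K (neg_part f) \<in> L2 M" using kop_L2(1) F by auto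
  have "AE x in M. kop K f x = 1 * kop K (pos_part f) x + (-1) * kop K (neg_part f) x"
    using kop_lincomb_AE[OF F(1,2), of 1 "-1"] F(5) by simp
  then have "L2_inner M (kop K f) g = L2_inner M (\<lambda>x. 1 * kop K (pos_part f) x + (-1) * kop K (neg_part f) x) g"
    using kop_L2(1)[OF f] L2_lincomb[OF KF, of 1 "-1"] g by (intro L2_inner_cong_AE) (auto simp: L2_def)
  also have "\<dots> = L2_inner M (kop K (pos_part f)) g - L2_inner M (kop K (neg_part f)) g"
    using L2_inner_lincomb_left[OF KF g, of 1 "-1"] by simp
  also have "L2_inner M (kop K (pos_part f)) g = L2_inner M (kop K (pos_part f)) (pos_part g) - L2_inner M (kop K (pos_part f)) (neg_part g)"
    using KF G L2_inner_lincomb_right[OF G(1,2) KF(1), of 1 "-1"] by (subst G(5)) simp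
  also have "L2_inner M (kop K (neg_part f)) g = L2_inner M (kop K (neg_part f)) (pos_part g) - L2_inner M (kop K (neg_part f)) (neg_part g)"
    using KF G L2_inner_lincomb_right[OF G(1,2) KF(2), of 1 "-1"] by (subst G(5)) simp
  finally show ?thesis by simp
qed

lemma L2_inner_kop_commute:
  assumes f: "f \<in> L2 M" and g: "g \<in> L2 M"
  shows "L2_inner M (kop K f) g = L2_inner M f (kop K g)"
proof -
  note F = L2_pos_neg_part[OF f] and G = L2_pos_neg_part[OF g]
  have "L2_inner M f (kop K g) = L2_inner M (kop K g) f" by (rule L2_inner_commute)
  also have "\<dots> = L2_inner M (kop K (pos_part g)) (pos_part f) - L2_inner M (kop K (pos_part g)) (neg_part f)
     - L2_inner M (kop K (neg_part g)) (pos_part f) + L2_inner M (kop K (neg_part g)) (neg_part f)" by (rule L2_inner_kop_pos_neg[OF g f])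
  also have "\<dots> = L2_inner M (kop K (pos_part f)) (pos_part g) - L2_inner M (kop K (pos_part f)) (neg_part g)
     - L2_inner M (kop K (neg_part f)) (pos_part g) + L2_inner M (kop K (neg_part f)) (neg_part g)"
  proof -
    have "L2_inner M (kop K (pos_part g)) (pos_part f) = L2_inner M (kop K (pos_part f)) (pos_part g)" by (rule L2_inner_kop_commute_nonneg[OF G(1) F(1) G(3) F(3)])
    moreover have "L2_inner M (kop K (pos_part g)) (neg_part f) = L2_inner M (kop K (neg_part f)) (pos_part g)" by (rule L2_inner_kop_commute_nonneg[OF G(1) F(2) G(3) F(4)])
    moreover have "L2_inner M (kop K (neg_part g)) (pos_part f) = L2_inner M (kop K (pos_part f)) (neg_part g)" by (rule L2_inner_kop_commute_nonneg[OF G(2) F(1) G(4) F(3)])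
    moreover have "L2_inner M (kop K (neg_part g)) (neg_part f) = L2_inner M (kop K (neg_part f)) (neg_part g)" by (rule L2_inner_kop_commute_nonneg[OF G(2) F(2) G(4) F(4)])
    ultimately show ?thesis by simp
  qed
  also have "\<dots> = L2_inner M (kop K f) g" by (rule L2_inner_kop_pos_neg[OF f g, symmetric])
  finally show ?thesis by simp
qed

lemma integral_kop:
  assumes f: "f \<in> L2 M"
  shows "(\<integral>x. kop K f x \<partial>M) = (\<integral>x. f x \<partial>M)"
proof -
  have one: "(\<lambda>x. 1) \<in> L2 M" unfolding L2_def by auto
  have k1: "AE x in M. kop K (\<lambda>x. 1) x = 1"
    using AE_space
  proof eventually_elim
    case (elim x)
    interpret Kx: prob_space "K x" using K_prob[of x] elim by simp
    show ?case unfolding kop_def by (simp add: Kx.prob_space)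
  qed
  have "(\<integral>x. kop K f x \<partial>M) = L2_inner M (kop K f) (\<lambda>x. 1)" unfolding L2_inner_def by simp
  also have "\<dots> = L2_inner M f (kop K (\<lambda>x. 1))" by (rule L2_inner_kop_commute[OF f one])
  also have "\<dots> = L2_inner M f (\<lambda>x. 1)"
    using k1 f kop_measurable[of "\<lambda>x. 1"] by (intro L2_inner_cong_AE) (auto simp: L2_def)
  also have "\<dots> = (\<integral>x. f x \<partial>M)" unfolding L2_inner_def by simp
  finally show ?thesis .
qed

lemma kop_L2_0_linear: "L2_0_linear M (kop K)"
  unfolding L2_0_linear_def
proof (intro conjI ballI allI)
  fix f assume f: "f \<in> L2_0 M"
  then have fL: "f \<in> L2 M" by (rule L2_0_imp_L2)
  show "kop K f \<in> L2_0 M" using kop_L2(1)[OF fL] integral_kop[OF fL] f unfolding L2_0_def L2_def by auto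
next
  fix f g a b assume "f \<in> L2_0 M" "g \<in> L2_0 M"
  then show "AE x in M. kop K (\<lambda>x. a * f x + b * g x) x = a * kop K f x + b * kop K g x"
    by (intro kop_lincomb_AE) (auto simp: L2_0_imp_L2)
qed

lemma kop_L2_0_bounded: "L2_0_bounded M (kop K) 1"
  unfolding L2_0_bounded_def using kop_L2(2) by (auto simp: L2_0_imp_L2)

lemma kop_L2_0_symmetric: "L2_0_symmetric M (kop K)"
  unfolding L2_0_symmetric_def using L2_inner_kop_commute by (auto simp: L2_0_imp_L2)

lemma abs_quadratic_form_kop_le:
  assumes f: "f \<in> L2 M"
  shows "\<bar>L2_inner M (kop K f) f\<bar> \<le> (L2_norm M f)\<^sup>2"
proof -
  have "\<bar>L2_inner M (kop K f) f\<bar> \<le> L2_norm M (kop K f) * L2_norm M f"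
    using kop_L2(1)[OF f] f by (intro L2_Cauchy_Schwarz)
  also have "\<dots> \<le> L2_norm M f * L2_norm M f"
    using kop_L2(2)[OF f] by (intro mult_right_mono) (auto simp: L2_norm_nonneg)
  finally show ?thesis by (simp add: power2_eq_square)
qed

end

section \<open>Mixtures of reversible kernels\<close>

lemma sums_le_convex_bound:
  fixes a x :: "nat \<Rightarrow> real"
  assumes a: "\<And>i. 0 \<le> a i" "a sums 1" and s: "(\<lambda>i. a i * x i) sums s"
    and x: "\<And>i. x i \<le> c" "x 0 \<le> d"
  shows "s \<le> c - a 0 * (c - d)"
proof (rule sums_le[OF _ s])
  have "(\<lambda>i. if i = 0 then a 0 * (c - d) else 0) sums (a 0 * (c - d))"
    using sums_single[of 0 "\<lambda>_. a 0 * (c - d)"] by simp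
  then show "(\<lambda>i. a i * c - (if i = 0 then a 0 * (c - d) else 0)) sums (c - a 0 * (c - d))"
    using sums_diff[OF sums_mult2[OF a(2), of c]] by simp
  show "a i * x i \<le> a i * c - (if i = 0 then a 0 * (c - d) else 0)" for i
  proof (cases "i = 0")
    case True
    then show ?thesis using mult_left_mono[OF x(2) a(1)] by (simp add: algebra_simps)
  qed (simp add: mult_left_mono[OF x(1) a(1)])
qed

locale kernel_mixture = prob_space M for M :: "'a measure" +
  fixes K :: "nat \<Rightarrow> 'a \<Rightarrow> 'a measure" and a :: "nat \<Rightarrow> real"
  assumes kern: "\<And>i. K i \<in> M \<rightarrow>\<^sub>M prob_algebra M"
    and rev: "\<And>i. reversible M (K i)"
    and a0: "\<And>i. 0 \<le> a i"
    and asum: "a sums 1"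
begin

lemma component_reversible_kernel: "reversible_kernel M (K i)"
  by (rule reversible_kernel.intro[OF prob_space_axioms]) (unfold_locales, auto intro: kern rev)

definition mixing_measure :: "nat measure" where "mixing_measure = density (count_space UNIV) (\<lambda>i. ennreal (a i))"

lemma mixing_measure_measurable: "x \<in> space M \<Longrightarrow> (\<lambda>i. K i x) \<in> mixing_measure \<rightarrow>\<^sub>M subprob_algebra M"
proof -
  assume x: "x \<in> space M"
  have "(\<lambda>i. K i x) \<in> count_space UNIV \<rightarrow>\<^sub>M subprob_algebra M"
    using measurable_space[OF reversible_kernel.K_subprob[OF component_reversible_kernel] x] by auto
  then show ?thesis unfolding mixing_measure_def by (simp add: measurable_cong_sets)
qed

lemma nn_integral_mixing_measure: "(\<integral>\<^sup>+i. f i \<partial>mixing_measure) = (\<Sum>i. ennreal (a i) * f i)"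
  unfolding mixing_measure_def by (simp add: nn_integral_density nn_integral_count_space_nat)

lemma mixture_eq_bind:
  assumes x: "x \<in> space M"
  shows "mixture M a K x = mixing_measure \<bind> (\<lambda>i. K i x)"
proof -
  have ne: "space mixing_measure \<noteq> {}" unfolding mixing_measure_def by simp
  have sb: "sets (mixing_measure \<bind> (\<lambda>i. K i x)) = sets M"
    using ne reversible_kernel.K_prob[OF component_reversible_kernel x] by (intro sets_bind) auto
  have spb: "space (mixing_measure \<bind> (\<lambda>i. K i x)) = space M" using sets_eq_imp_space_eq[OF sb] .
  have em: "emeasure (mixing_measure \<bind> (\<lambda>i. K i x)) B = (\<Sum>i. ennreal (a i) * emeasure (K i x) B)" if B: "B \<in> sets M" for B
    using emeasure_bind[OF ne mixing_measure_measurable[OF x] B] nn_integral_mixing_measure by simp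
  have "mixture M a K x = measure_of (space M) (sets M) (emeasure (mixing_measure \<bind> (\<lambda>i. K i x)))"
    unfolding mixture_def
    by (rule measure_of_eq) (auto simp: sets.space_closed sets.sigma_sets_eq em)
  also have "\<dots> = mixing_measure \<bind> (\<lambda>i. K i x)"
    using measure_of_of_measure[of "mixing_measure \<bind> (\<lambda>i. K i x)"] sb spb by simp
  finally show ?thesis .
qed

lemma sets_mixture: "x \<in> space M \<Longrightarrow> sets (mixture M a K x) = sets M"
  unfolding mixture_def by simp

lemma emeasure_mixture: "x \<in> space M \<Longrightarrow> B \<in> sets M \<Longrightarrow> emeasure (mixture M a K x) B = (\<Sum>i. ennreal (a i) * emeasure (K i x) B)"
  unfolding mixture_eq_bind using emeasure_bind[OF _ mixing_measure_measurable] nn_integral_mixing_measure unfolding mixing_measure_def by simp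

lemma prob_space_mixture: "x \<in> space M \<Longrightarrow> prob_space (mixture M a K x)"
proof -
  assume x: "x \<in> space M"
  have sp: "space (mixture M a K x) = space M" using sets_mixture[OF x] by (rule sets_eq_imp_space_eq)
  have "emeasure (mixture M a K x) (space M) = (\<Sum>i. ennreal (a i) * emeasure (K i x) (space M))"
    using emeasure_mixture[OF x] by simp
  also have "\<dots> = (\<Sum>i. ennreal (a i))"
  proof -
    have "emeasure (K i x) (space M) = 1" for i
      using reversible_kernel.K_prob[OF component_reversible_kernel x] reversible_kernel.space_K[OF component_reversible_kernel x] prob_space.emeasure_space_1 by metis
    then show ?thesis by simp
  qed
  also have "\<dots> = 1" using suminf_ennreal_eq[OF a0 asum] by simp
  finally show ?thesis using sp by (intro prob_spaceI) simp
qed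

lemma mixture_measurable: "mixture M a K \<in> M \<rightarrow>\<^sub>M prob_algebra M"
proof (rule measurable_prob_algebraI)
  show "prob_space (mixture M a K x)" if "x \<in> space M" for x using prob_space_mixture[OF that] .
  show "mixture M a K \<in> M \<rightarrow>\<^sub>M subprob_algebra M"
  proof (rule measurable_subprob_algebra)
    show "subprob_space (mixture M a K x)" if "x \<in> space M" for x
      using prob_space_mixture[OF that] by (rule prob_space_imp_subprob_space)
    show "sets (mixture M a K x) = sets M" if "x \<in> space M" for x using sets_mixture[OF that] .
    fix A assume A: "A \<in> sets M"
    have "(\<lambda>x. \<Sum>i. ennreal (a i) * emeasure (K i x) A) \<in> borel_measurable M"
      using reversible_kernel.measurable_emeasure_K[OF component_reversible_kernel A] by measurable
    then show "(\<lambda>x. emeasure (mixture M a K x) A) \<in> borel_measurable M"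
      by (rule measurable_cong[THEN iffD1, rotated]) (simp add: emeasure_mixture A)
  qed
qed

lemma nn_integral_indicator_emeasure_mixture:
  assumes A: "A \<in> sets M" and B: "B \<in> sets M"
  shows "(\<integral>\<^sup>+x. indicator A x * emeasure (mixture M a K x) B \<partial>M)
    = (\<Sum>i. ennreal (a i) * (\<integral>\<^sup>+x. indicator A x * emeasure (K i x) B \<partial>M))"
proof -
  have "{x \<in> space M. x \<in> A} = A" using sets.sets_into_space[OF A] by auto
  then have pA: "Measurable.pred M (\<lambda>x. x \<in> A)" unfolding pred_def using A by simp
  note meas = reversible_kernel.measurable_emeasure_K[OF component_reversible_kernel B]
  have "(\<integral>\<^sup>+x. indicator A x * emeasure (mixture M a K x) B \<partial>M)
      = (\<integral>\<^sup>+x. (\<Sum>i. ennreal (a i) * (indicator A x * emeasure (K i x) B)) \<partial>M)"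
  proof (intro nn_integral_cong)
    fix x assume x: "x \<in> space M"
    have "indicator A x * emeasure (mixture M a K x) B
        = (\<Sum>i. indicator A x * (ennreal (a i) * emeasure (K i x) B))"
      unfolding emeasure_mixture[OF x B] by (rule ennreal_suminf_cmult[symmetric])
    then show "indicator A x * emeasure (mixture M a K x) B
        = (\<Sum>i. ennreal (a i) * (indicator A x * emeasure (K i x) B))"
      by (simp add: mult.left_commute)
  qed
  also have "\<dots> = (\<Sum>i. \<integral>\<^sup>+x. ennreal (a i) * (indicator A x * emeasure (K i x) B) \<partial>M)"
    using meas pA by (intro nn_integral_suminf) measurable
  also have "\<dots> = (\<Sum>i. ennreal (a i) * (\<integral>\<^sup>+x. indicator A x * emeasure (K i x) B \<partial>M))"
    using meas pA by (intro suminf_cong nn_integral_cmult) measurable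
  finally show ?thesis .
qed

lemma reversible_mixture: "reversible M (mixture M a K)"
  unfolding reversible_def
  using rev nn_integral_indicator_emeasure_mixture unfolding reversible_def by simp

lemma reversible_kernel_mixture: "reversible_kernel M (mixture M a K)"
  by (rule reversible_kernel.intro[OF prob_space_axioms]) (unfold_locales, auto intro: mixture_measurable reversible_mixture)

lemma nn_integral_mixture:
  assumes x: "x \<in> space M" and v: "v \<in> borel_measurable M"
  shows "(\<integral>\<^sup>+y. v y \<partial>mixture M a K x) = (\<Sum>i. ennreal (a i) * (\<integral>\<^sup>+y. v y \<partial>K i x))"
  unfolding mixture_eq_bind[OF x] using nn_integral_bind[OF v mixing_measure_measurable[OF x]] nn_integral_mixing_measure by simp

lemma kernel_pairing_mixture:
  assumes u: "u \<in> borel_measurable M" and v: "v \<in> borel_measurable M"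
  shows "reversible_kernel.kernel_pairing M (mixture M a K) u v = (\<Sum>i. ennreal (a i) * reversible_kernel.kernel_pairing M (K i) u v)"
proof -
  have "reversible_kernel.kernel_pairing M (mixture M a K) u v = (\<integral>\<^sup>+x. (\<Sum>i. ennreal (a i) * (u x * (\<integral>\<^sup>+y. v y \<partial>K i x))) \<partial>M)"
    unfolding reversible_kernel.kernel_pairing_def[OF reversible_kernel_mixture] by (intro nn_integral_cong) (simp add: nn_integral_mixture v ac_simps)
  also have "\<dots> = (\<Sum>i. \<integral>\<^sup>+x. ennreal (a i) * (u x * (\<integral>\<^sup>+y. v y \<partial>K i x)) \<partial>M)"
    using reversible_kernel.measurable_nn_integral_K[OF component_reversible_kernel v] u by (intro nn_integral_suminf) measurable
  also have "\<dots> = (\<Sum>i. ennreal (a i) * reversible_kernel.kernel_pairing M (K i) u v)"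
    unfolding reversible_kernel.kernel_pairing_def[OF component_reversible_kernel]
    using reversible_kernel.measurable_nn_integral_K[OF component_reversible_kernel v] u by (intro suminf_cong nn_integral_cmult) measurable
  finally show ?thesis .
qed

lemma L2_inner_kop_mixture_nonneg:
  assumes p: "p \<in> L2 M" and q: "q \<in> L2 M" and p0: "\<And>y. 0 \<le> p y" and q0: "\<And>y. 0 \<le> q y"
  shows "(\<lambda>i. a i * L2_inner M (kop (K i) p) q) sums L2_inner M (kop (mixture M a K) p) q"
proof -
  have pm: "p \<in> borel_measurable M" and qm: "q \<in> borel_measurable M" using p q unfolding L2_def by auto
  have J0: "0 \<le> L2_inner M (kop L p) q" if "reversible_kernel M L" for L
    unfolding L2_inner_def using reversible_kernel.kop_nonneg[OF that p0] q0 by (auto intro!: Bochner_Integration.integral_nonneg)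
  have "ennreal (L2_inner M (kop (mixture M a K) p) q) = reversible_kernel.kernel_pairing M (mixture M a K) (\<lambda>x. ennreal (q x)) (\<lambda>y. ennreal (p y))"
    using reversible_kernel.kernel_pairing_eq_L2_inner[OF reversible_kernel_mixture p q p0 q0] by simp
  also have "\<dots> = (\<Sum>i. ennreal (a i) * reversible_kernel.kernel_pairing M (K i) (\<lambda>x. ennreal (q x)) (\<lambda>y. ennreal (p y)))"
    using pm qm by (intro kernel_pairing_mixture) auto
  also have "\<dots> = (\<Sum>i. ennreal (a i * L2_inner M (kop (K i) p) q))"
    using reversible_kernel.kernel_pairing_eq_L2_inner[OF component_reversible_kernel p q p0 q0] a0 by (simp add: ennreal_mult')
  finally have e: "(\<Sum>i. ennreal (a i * L2_inner M (kop (K i) p) q)) = ennreal (L2_inner M (kop (mixture M a K) p) q)" by simp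
  have "(\<lambda>i. ennreal (a i * L2_inner M (kop (K i) p) q)) sums ennreal (L2_inner M (kop (mixture M a K) p) q)"
    unfolding e[symmetric] by (rule summable_sums[OF summableI])
  then show ?thesis using a0 J0[OF component_reversible_kernel] J0[OF reversible_kernel_mixture] by (subst (asm) sums_ennreal) auto
qed

lemma quadratic_form_kop_mixture_sums:
  assumes f: "f \<in> L2 M"
  shows "(\<lambda>i. a i * L2_inner M (kop (K i) f) f) sums L2_inner M (kop (mixture M a K) f) f"
proof -
  note F = L2_pos_neg_part[OF f]
  have s: "(\<lambda>i. a i * L2_inner M (kop (K i) (pos_part f)) (pos_part f) - a i * L2_inner M (kop (K i) (pos_part f)) (neg_part f)
      - a i * L2_inner M (kop (K i) (neg_part f)) (pos_part f) + a i * L2_inner M (kop (K i) (neg_part f)) (neg_part f))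
    sums (L2_inner M (kop (mixture M a K) (pos_part f)) (pos_part f) - L2_inner M (kop (mixture M a K) (pos_part f)) (neg_part f)
      - L2_inner M (kop (mixture M a K) (neg_part f)) (pos_part f) + L2_inner M (kop (mixture M a K) (neg_part f)) (neg_part f))"
    by (intro sums_add sums_diff L2_inner_kop_mixture_nonneg F(1-4))
  have "a i * L2_inner M (kop (K i) f) f = a i * L2_inner M (kop (K i) (pos_part f)) (pos_part f) - a i * L2_inner M (kop (K i) (pos_part f)) (neg_part f)
      - a i * L2_inner M (kop (K i) (neg_part f)) (pos_part f) + a i * L2_inner M (kop (K i) (neg_part f)) (neg_part f)" for i
    by (subst reversible_kernel.L2_inner_kop_pos_neg[OF component_reversible_kernel f f]) (simp add: algebra_simps)
  moreover have "L2_inner M (kop (mixture M a K) f) f = L2_inner M (kop (mixture M a K) (pos_part f)) (pos_part f) - L2_inner M (kop (mixture M a K) (pos_part f)) (neg_part f)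
      - L2_inner M (kop (mixture M a K) (neg_part f)) (pos_part f) + L2_inner M (kop (mixture M a K) (neg_part f)) (neg_part f)"
    by (rule reversible_kernel.L2_inner_kop_pos_neg[OF reversible_kernel_mixture f f])
  ultimately show ?thesis using s by simp
qed

lemma quadratic_form_kop_mixture_le:
  assumes f: "f \<in> L2 M" and K0: "L2_inner M (kop (K 0) f) f \<le> r * (L2_norm M f)\<^sup>2"
  shows "L2_inner M (kop (mixture M a K) f) f \<le> (1 - a 0 * (1 - r)) * (L2_norm M f)\<^sup>2"
proof -
  have "L2_inner M (kop (mixture M a K) f) f \<le> (L2_norm M f)\<^sup>2 - a 0 * ((L2_norm M f)\<^sup>2 - r * (L2_norm M f)\<^sup>2)"
  proof (rule sums_le_convex_bound[OF a0 asum quadratic_form_kop_mixture_sums[OF f] _ K0])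
    show "L2_inner M (kop (K i) f) f \<le> (L2_norm M f)\<^sup>2" for i
      by (rule abs_le_D1[OF reversible_kernel.abs_quadratic_form_kop_le[OF component_reversible_kernel f]])
  qed
  then show ?thesis by (simp add: algebra_simps)
qed

lemma quadratic_form_kop_mixture_ge:
  assumes f: "f \<in> L2 M" and K0: "- r * (L2_norm M f)\<^sup>2 \<le> L2_inner M (kop (K 0) f) f"
  shows "- (1 - a 0 * (1 - r)) * (L2_norm M f)\<^sup>2 \<le> L2_inner M (kop (mixture M a K) f) f"
proof -
  have "- L2_inner M (kop (mixture M a K) f) f \<le> (L2_norm M f)\<^sup>2 - a 0 * ((L2_norm M f)\<^sup>2 - r * (L2_norm M f)\<^sup>2)"
  proof (rule sums_le_convex_bound[OF a0 asum])
    show "(\<lambda>i. a i * - L2_inner M (kop (K i) f) f) sums - L2_inner M (kop (mixture M a K) f) f"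
      using sums_minus[OF quadratic_form_kop_mixture_sums[OF f]] by simp
    show "- L2_inner M (kop (K i) f) f \<le> (L2_norm M f)\<^sup>2" for i
      by (rule abs_le_D2[OF reversible_kernel.abs_quadratic_form_kop_le[OF component_reversible_kernel f]])
  qed (use K0 in simp)
  then show ?thesis by (simp add: algebra_simps)
qed

lemma variance_bounding_mixture:
  assumes "0 < a 0" "variance_bounding M (K 0)"
  shows "variance_bounding M (mixture M a K)"
proof -
  interpret K0: reversible_kernel M "K 0" by (rule component_reversible_kernel)
  interpret Kmix: reversible_kernel M "mixture M a K" by (rule reversible_kernel_mixture)
  from assms(2) obtain r where r: "r < 1" "\<And>l. l \<in> L2_0_spectrum M (kop (K 0)) \<Longrightarrow> l \<le> r"
    unfolding variance_bounding_def spectrum0_eq_L2_0_spectrum by blast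
  have "L2_inner M (kop (mixture M a K) f) f \<le> (1 - a 0 * (1 - r)) * (L2_norm M f)\<^sup>2" if "f \<in> L2_0 M" for f
    using quadratic_form_le_of_L2_0_spectrum_le[OF K0.kop_L2_0_linear K0.kop_L2_0_bounded K0.kop_L2_0_symmetric r(2) that]
    by (rule quadratic_form_kop_mixture_le[OF L2_0_imp_L2[OF that]])
  then have "l \<le> 1 - a 0 * (1 - r)" if "l \<in> L2_0_spectrum M (kop (mixture M a K))" for l
    by (rule L2_0_spectrum_le_of_quadratic_form_le[OF Kmix.kop_L2_0_linear Kmix.kop_L2_0_bounded
        Kmix.kop_L2_0_symmetric _ that])
  moreover have "1 - a 0 * (1 - r) < 1" using assms(1) r(1) by simp
  ultimately show ?thesis unfolding variance_bounding_def spectrum0_eq_L2_0_spectrum by blast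
qed

lemma geometrically_ergodic_mixture:
  assumes "0 < a 0" "geometrically_ergodic M (K 0)"
  shows "geometrically_ergodic M (mixture M a K)"
proof -
  interpret K0: reversible_kernel M "K 0" by (rule component_reversible_kernel)
  interpret Kmix: reversible_kernel M "mixture M a K" by (rule reversible_kernel_mixture)
  note K0 = K0.kop_L2_0_linear K0.kop_L2_0_bounded K0.kop_L2_0_symmetric
  note Kmix = Kmix.kop_L2_0_linear Kmix.kop_L2_0_bounded Kmix.kop_L2_0_symmetric
  from assms(2) obtain r where r: "r < 1" "\<And>l. l \<in> L2_0_spectrum M (kop (K 0)) \<Longrightarrow> \<bar>l\<bar> \<le> r"
    unfolding geometrically_ergodic_def spectrum0_eq_L2_0_spectrum by blast
  define m where "m = 1 - a 0 * (1 - r)"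
  have "l \<le> r" "- r \<le> l" if "l \<in> L2_0_spectrum M (kop (K 0))" for l using r(2)[OF that] by auto
  then have "L2_inner M (kop (mixture M a K) f) f \<le> m * (L2_norm M f)\<^sup>2"
    "- m * (L2_norm M f)\<^sup>2 \<le> L2_inner M (kop (mixture M a K) f) f" if "f \<in> L2_0 M" for f
    unfolding m_def using that
    by (blast intro: quadratic_form_kop_mixture_le quadratic_form_kop_mixture_ge L2_0_imp_L2
        quadratic_form_le_of_L2_0_spectrum_le[OF K0] quadratic_form_ge_of_L2_0_spectrum_ge[OF K0])+
  then have "\<bar>l\<bar> \<le> m" if "l \<in> L2_0_spectrum M (kop (mixture M a K))" for l
    using L2_0_spectrum_le_of_quadratic_form_le[OF Kmix _ that]
      L2_0_spectrum_ge_of_quadratic_form_ge[OF Kmix _ that, of "- m"] by (auto simp: abs_le_iff)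
  moreover have "m < 1" unfolding m_def using assms(1) r(1) by simp
  ultimately show ?thesis unfolding geometrically_ergodic_def spectrum0_eq_L2_0_spectrum by blast
qed

end

theorem theorem5:
  fixes \<pi> :: "'a measure" and K :: "nat \<Rightarrow> 'a \<Rightarrow> 'a measure" and a :: "nat \<Rightarrow> real"
  assumes "prob_space \<pi>"
    and "\<And>i. markov_kernel \<pi> (K i)"
    and "\<And>i. reversible \<pi> (K i)"
    and "\<And>i. a i \<ge> 0"
    and "a sums 1"
    and "a 0 > 0"
    and "unique_invariant \<pi> (K 0)"
  shows "(variance_bounding \<pi> (K 0) \<longrightarrow> variance_bounding \<pi> (mixture \<pi> a K)) \<and>
         (geometrically_ergodic \<pi> (K 0) \<longrightarrow> geometrically_ergodic \<pi> (mixture \<pi> a K))"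
proof -
  interpret kernel_mixture \<pi> K a
    using assms(1-5) by (intro kernel_mixture.intro kernel_mixture_axioms.intro) (auto simp: markov_kernel_def)
  show ?thesis using variance_bounding_mixture geometrically_ergodic_mixture assms(6) by blast
qed

end
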